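(* Let $n,m\ge1$ and $N_0=\min\{n,m\}$. The maximum of $\tilde M_\diamond(\Theta)=\min_{\Phi\in\mathcal{DI}}\max_{|\psi\rangle}\|\Delta(\Theta-\Phi)(|\psi\rangle\langle\psi|)\|_1$ over all quantum channels $\Theta$ with input dimension $n$ and output dimension $m$ equals $$\frac{2(N_0-1)}{N_0}.$$ This value is attained both by a channel acting as the (discrete quantum) Fourier transform on an $N_0$-dimensional subspace spanned by incoherent basis states, and by the measurement in the $N_0$-dimensional Fourier basis whose outcomes are encoded in incoherent basis states.
   Context: Every finite-dimensional system carries a fixed orthonormal incoherent basis $\{|i\rangle\}$. The total dephasing map is $\Delta(\rho)=\sum_i|i\rangle\langle i|\rho|i\rangle\langle i|$. A quantum channel (operation) is a completely positive trace-preserving linear map. $\Phi$ is detection-incoherent ($\Phi\in\mathcal{DI}$) iff $\Delta\Phi=\Delta\Phi\Delta$; the minimum is over detection-incoherent channels with the same input and output dimensions as $\Theta$, and the maximum over pure input states. $\|\cdot\|_1$ is the trace norm $\|A\|_1=\operatorname{tr}\sqrt{A^\dagger A}$. *)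

theory Defs
  imports Complex_Main "Jordan_Normal_Form.Matrix"
begin

section \<open>Basic matrix notions (complex matrices, fixed incoherent basis = standard basis)\<close>

definition ctrace :: "complex mat \<Rightarrow> complex" where
  "ctrace A = (\<Sum>i<dim_row A. A $$ (i, i))"

definition adj :: "complex mat \<Rightarrow> complex mat" where
  "adj A = mat (dim_col A) (dim_row A) (\<lambda>(i, j). cnj (A $$ (j, i)))"

definition psd :: "nat \<Rightarrow> complex mat \<Rightarrow> bool" where
  "psd d A \<longleftrightarrow> A \<in> carrier_mat d d \<and>
     (\<forall>v \<in> carrier_vec d. Im (\<Sum>i<d. \<Sum>j<d. cnj (v $ i) * A $$ (i, j) * v $ j) = 0 \<and>
                          Re (\<Sum>i<d. \<Sum>j<d. cnj (v $ i) * A $$ (i, j) * v $ j) \<ge> 0)"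

definition psd_sqrt :: "complex mat \<Rightarrow> complex mat" where
  "psd_sqrt B = (THE P. psd (dim_row B) P \<and> P * P = B)"

definition trace_norm :: "complex mat \<Rightarrow> real" where
  "trace_norm A = Re (ctrace (psd_sqrt (adj A * A)))"

definition dephase :: "complex mat \<Rightarrow> complex mat" where
  "dephase A = mat (dim_row A) (dim_col A) (\<lambda>(i, j). if i = j then A $$ (i, i) else 0)"

text \<open>A linear map from n x n matrices to m x m matrices (values outside
  the n x n matrices are irrelevant).\<close>
definition lin_map :: "nat \<Rightarrow> nat \<Rightarrow> (complex mat \<Rightarrow> complex mat) \<Rightarrow> bool" where
  "lin_map n m \<Phi> \<longleftrightarrow>
     (\<forall>A \<in> carrier_mat n n. \<Phi> A \<in> carrier_mat m m) \<and>
     (\<forall>A \<in> carrier_mat n n. \<forall>B \<in> carrier_mat n n. \<Phi> (A + B) = \<Phi> A + \<Phi> B) \<and>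
     (\<forall>A \<in> carrier_mat n n. \<forall>c. \<Phi> (c \<cdot>\<^sub>m A) = c \<cdot>\<^sub>m \<Phi> A)"

definition blk :: "nat \<Rightarrow> complex mat \<Rightarrow> nat \<Rightarrow> nat \<Rightarrow> complex mat" where
  "blk n X a b = mat n n (\<lambda>(i, j). X $$ (a * n + i, b * n + j))"

text \<open>The map id_k \<otimes> \<Phi> acting on (k n) x (k n) matrices.\<close>
definition ampl :: "nat \<Rightarrow> nat \<Rightarrow> nat \<Rightarrow> (complex mat \<Rightarrow> complex mat) \<Rightarrow> complex mat \<Rightarrow> complex mat" where
  "ampl k n m \<Phi> X = mat (k * m) (k * m)
     (\<lambda>(r, c). \<Phi> (blk n X (r div m) (c div m)) $$ (r mod m, c mod m))"

definition completely_positive :: "nat \<Rightarrow> nat \<Rightarrow> (complex mat \<Rightarrow> complex mat) \<Rightarrow> bool" where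
  "completely_positive n m \<Phi> \<longleftrightarrow>
     (\<forall>k \<ge> 1. \<forall>X. psd (k * n) X \<longrightarrow> psd (k * m) (ampl k n m \<Phi> X))"

definition trace_preserving :: "nat \<Rightarrow> (complex mat \<Rightarrow> complex mat) \<Rightarrow> bool" where
  "trace_preserving n \<Phi> \<longleftrightarrow> (\<forall>A \<in> carrier_mat n n. ctrace (\<Phi> A) = ctrace A)"

definition quantum_channel :: "nat \<Rightarrow> nat \<Rightarrow> (complex mat \<Rightarrow> complex mat) \<Rightarrow> bool" where
  "quantum_channel n m \<Phi> \<longleftrightarrow>
     lin_map n m \<Phi> \<and> completely_positive n m \<Phi> \<and> trace_preserving n \<Phi>"

definition detection_incoherent :: "nat \<Rightarrow> (complex mat \<Rightarrow> complex mat) \<Rightarrow> bool" where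
  "detection_incoherent n \<Phi> \<longleftrightarrow>
     (\<forall>A \<in> carrier_mat n n. dephase (\<Phi> A) = dephase (\<Phi> (dephase A)))"

definition DI_channels :: "nat \<Rightarrow> nat \<Rightarrow> (complex mat \<Rightarrow> complex mat) set" where
  "DI_channels n m = {\<Phi>. quantum_channel n m \<Phi> \<and> detection_incoherent n \<Phi>}"

definition unit_vecs_c :: "nat \<Rightarrow> complex vec set" where
  "unit_vecs_c n = {\<psi> \<in> carrier_vec n. (\<Sum>i<n. (cmod (\<psi> $ i))\<^sup>2) = 1}"

definition proj :: "complex vec \<Rightarrow> complex mat" where
  "proj \<psi> = mat (dim_vec \<psi>) (dim_vec \<psi>) (\<lambda>(i, j). \<psi> $ i * cnj (\<psi> $ j))"

text \<open>min over DI channels of max over pure input states (written as Inf / Sup).\<close>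
definition M_tilde_diamond :: "nat \<Rightarrow> nat \<Rightarrow> (complex mat \<Rightarrow> complex mat) \<Rightarrow> real" where
  "M_tilde_diamond n m \<Theta> =
     (INF \<Phi> \<in> DI_channels n m. SUP \<psi> \<in> unit_vecs_c n.
        trace_norm (dephase (\<Theta> (proj \<psi>) - \<Phi> (proj \<psi>))))"

definition fourier_mat :: "nat \<Rightarrow> complex mat" where
  "fourier_mat N = mat N N (\<lambda>(j, k).
     exp (2 * pi * \<i> * of_nat (j * k) / of_nat N) / complex_of_real (sqrt (real N)))"

definition embed :: "nat \<Rightarrow> nat \<Rightarrow> complex mat" where
  "embed d N0 = mat d N0 (\<lambda>(i, j). if i = j then 1 else 0)"

definition ket0bra0 :: "nat \<Rightarrow> complex mat" where
  "ket0bra0 m = mat m m (\<lambda>(i, j). if i = 0 \<and> j = 0 then 1 else 0)"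

definition outside_weight :: "nat \<Rightarrow> nat \<Rightarrow> complex mat \<Rightarrow> complex" where
  "outside_weight n N0 \<rho> = (\<Sum>i\<in>{N0..<n}. \<rho> $$ (i, i))"

text \<open>Acts as the Fourier transform F_N0 between the subspaces spanned by the first
  N0 incoherent basis states of input and output; any weight outside that input
  subspace (only possible if n > m) is sent to |0><0|.\<close>
definition fourier_channel :: "nat \<Rightarrow> nat \<Rightarrow> complex mat \<Rightarrow> complex mat" where
  "fourier_channel n m \<rho> =
     (let N0 = min n m; V = embed m N0 * fourier_mat N0 * adj (embed n N0)
      in V * \<rho> * adj V + outside_weight n N0 \<rho> \<cdot>\<^sub>m ket0bra0 m)"

text \<open>Measurement in the N0-dimensional Fourier basis f_k = F|k> (k < N0) of the input
  subspace, outcome k recorded as |k><k| in the output; weight outside that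
  subspace (only possible if n > m) is sent to |0><0|.\<close>
definition fourier_measurement :: "nat \<Rightarrow> nat \<Rightarrow> complex mat \<Rightarrow> complex mat" where
  "fourier_measurement n m \<rho> =
     (let N0 = min n m; F = embed n N0 * fourier_mat N0;
          p = (\<lambda>k. \<Sum>i<n. \<Sum>j<n. cnj (F $$ (i, k)) * \<rho> $$ (i, j) * F $$ (j, k))
      in mat m m (\<lambda>(i, j). if i = j \<and> i < N0 then p i else 0)
         + outside_weight n N0 \<rho> \<cdot>\<^sub>m ket0bra0 m)"

end

theory Submission
  imports Defs
begin

text \<open>Only diagonals matter: the trace norm of a dephased difference is the \<open>l\<^sub>1\<close> distance of the
  diagonals (computed from the definition through the uniqueness of positive square roots of
  diagonal matrices), and the diagonal of a channel output on a pure state is a probability vector.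

  Upper bound. If \<open>m \<le> n\<close>, compare \<open>\<Theta>\<close> with the completely depolarizing channel, which is
  detection-incoherent and has uniform output diagonal; a probability vector is at \<open>l\<^sub>1\<close> distance at
  most \<open>2 (m - 1) / m\<close> from the uniform one. If \<open>n < m\<close>, compare \<open>\<Theta>\<close> with \<open>\<Theta> \<circ> \<Delta>\<close>: by the
  orthogonality of the characters of \<open>\<int>/n\<close>, \<open>\<Delta> |\<psi>\<rangle>\<langle>\<psi>|\<close> is the average of the projections onto
  \<open>Z\<^sup>k \<psi>\<close>, \<open>k < n\<close>, for the clock matrix \<open>Z\<close>; the term \<open>k = 0\<close> contributes nothing and every
  other term at most \<open>2\<close>.

  Lower bound. The \<open>N\<^sub>0\<close> Fourier states have the same diagonal, so a detection-incoherent \<open>\<Phi>\<close>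
  gives them the same output diagonal \<open>q\<close>, whereas both Fourier channels send the \<open>k\<close>-th of them
  to \<open>|k\<rangle>\<langle>k|\<close>. Some \<open>k < N\<^sub>0\<close> has \<open>q\<^sub>k \<le> 1 / N\<^sub>0\<close>, and the distance on that state is at least
  \<open>2 - 2 q\<^sub>k \<ge> 2 (N\<^sub>0 - 1) / N\<^sub>0\<close>.\<close>

lemma block_index_less:
  fixes \<alpha> k i m :: nat
  assumes "\<alpha> < k" "i < m"
  shows "\<alpha> * m + i < k * m"
proof -
  have "\<alpha> * m + i < Suc \<alpha> * m" using assms(2) by simp
  also have "\<dots> \<le> k * m" using assms(1) by (intro mult_le_mono1) simp
  finally show ?thesis .
qed

lemma sum_lessThan_mult_split:
  fixes k m :: nat and f :: "nat \<Rightarrow> 'a::comm_monoid_add"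
  shows "(\<Sum>r<k * m. f r) = (\<Sum>\<alpha><k. \<Sum>i<m. f (\<alpha> * m + i))"
proof -
  have "(\<Sum>r<k * m. f r) = (\<Sum>\<alpha><k. sum f {\<alpha> * m..<\<alpha> * m + m})"
    by (rule sum.nat_group[symmetric])
  also have "\<dots> = (\<Sum>\<alpha><k. \<Sum>i<m. f (\<alpha> * m + i))"
  proof (rule sum.cong[OF refl])
    fix \<alpha>
    show "sum f {\<alpha> * m..<\<alpha> * m + m} = (\<Sum>i<m. f (\<alpha> * m + i))"
      using sum.shift_bounds_nat_ivl[of f 0 "\<alpha> * m" m] by (simp add: atLeast0LessThan add.commute)
  qed
  finally show ?thesis .
qed

lemma sum_lessThan_restrict:
  fixes N m :: nat
  assumes "N \<le> m"
  shows "(\<Sum>i<m. if i < N then f i else 0) = (\<Sum>i<N. f i)"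
proof -
  have "(\<Sum>i<m. if i < N then f i else 0) = (\<Sum>i\<in>{..<m} \<inter> {i. i < N}. f i)"
    by (subst sum.inter_restrict) auto
  also have "{..<m} \<inter> {i. i < N} = {..<N}" using assms by auto
  finally show ?thesis .
qed

lemma index_mult_mat_sum:
  assumes "A \<in> carrier_mat a b" "B \<in> carrier_mat b c" "i < a" "j < c"
  shows "(A * B) $$ (i, j) = (\<Sum>k<b. A $$ (i, k) * B $$ (k, j))"
  using assms by (simp add: scalar_prod_def atLeast0LessThan)

lemma adj_carrier [simp]: "adj A \<in> carrier_mat (dim_col A) (dim_row A)"
  unfolding adj_def by simp

lemma index_adj [simp]:
  "i < dim_col A \<Longrightarrow> j < dim_row A \<Longrightarrow> adj A $$ (i, j) = cnj (A $$ (j, i))"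
  unfolding adj_def by simp

lemma dim_adj [simp]: "dim_row (adj A) = dim_col A" "dim_col (adj A) = dim_row A"
  unfolding adj_def by simp_all

lemma proj_carrier [simp]: "\<psi> \<in> carrier_vec n \<Longrightarrow> proj \<psi> \<in> carrier_mat n n"
  unfolding proj_def by simp

lemma index_proj [simp]:
  "i < dim_vec \<psi> \<Longrightarrow> j < dim_vec \<psi> \<Longrightarrow> proj \<psi> $$ (i, j) = \<psi> $ i * cnj (\<psi> $ j)"
  unfolding proj_def by simp

lemma dim_proj [simp]: "dim_row (proj \<psi>) = dim_vec \<psi>" "dim_col (proj \<psi>) = dim_vec \<psi>"
  unfolding proj_def by simp_all

lemma dephase_carrier [simp]: "dephase A \<in> carrier_mat (dim_row A) (dim_col A)"
  unfolding dephase_def by simp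

lemma dephase_eq_mat_diag: "A \<in> carrier_mat m m \<Longrightarrow> dephase A = mat_diag m (\<lambda>i. A $$ (i, i))"
  by (intro eq_matI) (auto simp: dephase_def mat_diag_def)

lemma ctrace_dephase: "A \<in> carrier_mat n n \<Longrightarrow> ctrace (dephase A) = ctrace A"
  unfolding ctrace_def dephase_def by simp

lemma dephase_idem: "A \<in> carrier_mat n n \<Longrightarrow> dephase (dephase A) = dephase A"
  by (intro eq_matI) (auto simp: dephase_def)

lemma index_sandwich:
  assumes V: "V \<in> carrier_mat m n" and \<rho>: "\<rho> \<in> carrier_mat n n" and ij: "i < m" "j < m"
  shows "(V * \<rho> * adj V) $$ (i, j) = (\<Sum>a<n. \<Sum>b<n. V $$ (i, a) * \<rho> $$ (a, b) * cnj (V $$ (j, b)))"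
proof -
  have "(V * \<rho> * adj V) $$ (i, j) = (\<Sum>b<n. (V * \<rho>) $$ (i, b) * adj V $$ (b, j))"
    using assms by (intro index_mult_mat_sum[of _ m n]) (auto simp: adj_def)
  also have "\<dots> = (\<Sum>b<n. (\<Sum>a<n. V $$ (i, a) * \<rho> $$ (a, b)) * cnj (V $$ (j, b)))"
    using assms by (intro sum.cong refl) (subst index_mult_mat_sum[OF V \<rho>], auto simp: adj_def)
  also have "\<dots> = (\<Sum>b<n. \<Sum>a<n. V $$ (i, a) * \<rho> $$ (a, b) * cnj (V $$ (j, b)))"
    by (simp add: sum_distrib_right)
  also have "\<dots> = (\<Sum>a<n. \<Sum>b<n. V $$ (i, a) * \<rho> $$ (a, b) * cnj (V $$ (j, b)))"
    by (rule sum.swap)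
  finally show ?thesis .
qed

section \<open>Positive semidefinite matrices\<close>

definition quad_form :: "nat \<Rightarrow> complex mat \<Rightarrow> complex vec \<Rightarrow> complex" where
  "quad_form d A v = (\<Sum>i<d. \<Sum>j<d. cnj (v $ i) * A $$ (i, j) * v $ j)"

lemma psd_iff_quad_form:
  "psd d A \<longleftrightarrow> A \<in> carrier_mat d d \<and>
     (\<forall>v \<in> carrier_vec d. Im (quad_form d A v) = 0 \<and> Re (quad_form d A v) \<ge> 0)"
  unfolding psd_def quad_form_def ..

lemma psd_carrier: "psd d A \<Longrightarrow> A \<in> carrier_mat d d"
  unfolding psd_def by (rule conjunct1)

lemma psd_quad_form:
  assumes "psd d A" "v \<in> carrier_vec d"
  shows "Im (quad_form d A v) = 0" "Re (quad_form d A v) \<ge> 0"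
  using assms unfolding psd_iff_quad_form by auto

lemma quad_form_unit_vec:
  assumes "i < d"
  shows "quad_form d P (unit_vec d i) = P $$ (i, i)"
proof -
  have "quad_form d P (unit_vec d i) = (\<Sum>a<d. \<Sum>b<d. if a = i \<and> b = i then P $$ (a, b) else 0)"
    unfolding quad_form_def using assms by (intro sum.cong refl) auto
  also have "\<dots> = (\<Sum>a<d. if a = i then P $$ (a, i) else 0)"
    using assms by (intro sum.cong refl) auto
  also have "\<dots> = P $$ (i, i)" using assms by simp
  finally show ?thesis .
qed

lemma psd_diag:
  assumes "psd d P" "i < d"
  shows "Im (P $$ (i, i)) = 0" "Re (P $$ (i, i)) \<ge> 0"
  using psd_quad_form[OF assms(1) unit_vec_carrier, of i] quad_form_unit_vec[OF assms(2)] by auto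

lemma sum_two_deltas:
  fixes g :: "nat \<Rightarrow> complex"
  assumes "i < d" "j < d" "i \<noteq> j"
  shows "(\<Sum>b<d. g b * (if b = i then x else if b = j then y else 0)) = g i * x + g j * y"
proof -
  have "(\<Sum>b<d. g b * (if b = i then x else if b = j then y else 0)) =
        (\<Sum>b<d. (if b = i then g b * x else 0) + (if b = j then g b * y else 0))"
    using assms by (intro sum.cong) auto
  also have "\<dots> = g i * x + g j * y" using assms by (simp add: sum.distrib)
  finally show ?thesis .
qed

lemma quad_form_two_point:
  assumes "i < d" "j < d" "i \<noteq> j"
  shows "quad_form d P (vec d (\<lambda>l. if l = i then 1 else if l = j then c else 0)) =
     P $$ (i, i) + c * P $$ (i, j) + cnj c * P $$ (j, i) + cnj c * c * P $$ (j, j)"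
proof -
  define v where "v l = (if l = i then 1 else if l = j then c else 0)" for l
  have "quad_form d P (vec d v) = (\<Sum>a<d. (\<Sum>b<d. cnj (v a) * P $$ (a, b) * v b))"
    unfolding quad_form_def by (intro sum.cong) auto
  also have "\<dots> = (\<Sum>a<d. (P $$ (a, i) + P $$ (a, j) * c) * (if a = i then 1 else if a = j then cnj c else 0))"
  proof (rule sum.cong[OF refl])
    fix a
    have "(\<Sum>b<d. cnj (v a) * P $$ (a, b) * v b) = cnj (v a) * (\<Sum>b<d. P $$ (a, b) * v b)"
      by (simp add: sum_distrib_left mult.assoc)
    also have "\<dots> = cnj (v a) * (P $$ (a, i) + P $$ (a, j) * c)"
      unfolding v_def using sum_two_deltas[OF assms, of "\<lambda>b. P $$ (a, b)" 1 c] by simp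
    finally show "(\<Sum>b<d. cnj (v a) * P $$ (a, b) * v b) =
        (P $$ (a, i) + P $$ (a, j) * c) * (if a = i then 1 else if a = j then cnj c else 0)"
      by (simp add: v_def mult.commute)
  qed
  also have "\<dots> = (P $$ (i, i) + P $$ (i, j) * c) * 1 + (P $$ (j, i) + P $$ (j, j) * c) * cnj c"
    using assms by (rule sum_two_deltas)
  finally show ?thesis unfolding v_def by (simp add: algebra_simps)
qed

lemma psd_hermitian:
  assumes P: "psd d P" and ij: "i < d" "j < d"
  shows "P $$ (j, i) = cnj (P $$ (i, j))"
proof (cases "i = j")
  case True
  then show ?thesis using psd_diag(1)[OF P ij(1)] by (simp add: complex_eq_iff)
next
  case False
  have "Im (quad_form d P (vec d (\<lambda>l. if l = i then 1 else if l = j then c else 0))) = 0" for c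
    using P by (rule psd_quad_form) simp
  from this[of 1] this[of \<i>] psd_diag(1)[OF P ij(1)] psd_diag(1)[OF P ij(2)]
  show ?thesis unfolding quad_form_two_point[OF ij False] by (simp add: complex_eq_iff)
qed

lemma psd_proj:
  assumes "\<psi> \<in> carrier_vec n"
  shows "psd n (proj \<psi>)"
  unfolding psd_iff_quad_form
proof (intro conjI ballI)
  fix v :: "complex vec" assume "v \<in> carrier_vec n"
  define a where "a = (\<Sum>i<n. cnj (v $ i) * \<psi> $ i)"
  have "quad_form n (proj \<psi>) v = a * cnj a"
    unfolding quad_form_def a_def cnj_sum sum_product using assms
    by (intro sum.cong refl) (simp add: mult_ac)
  also have "\<dots> = complex_of_real ((cmod a)\<^sup>2)" by (simp only: complex_norm_square)
  finally show "Im (quad_form n (proj \<psi>) v) = 0" "Re (quad_form n (proj \<psi>) v) \<ge> 0" by simp_all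
qed (use assms in simp)

lemma psd_mat_diag:
  assumes "\<And>i. 0 \<le> s i"
  shows "psd d (mat_diag d (\<lambda>i. complex_of_real (s i)))"
  unfolding psd_iff_quad_form
proof (intro conjI ballI)
  fix v :: "complex vec" assume "v \<in> carrier_vec d"
  have "quad_form d (mat_diag d (\<lambda>i. complex_of_real (s i))) v =
      (\<Sum>i<d. complex_of_real (s i * (cmod (v $ i))\<^sup>2))"
    unfolding quad_form_def
  proof (rule sum.cong[OF refl])
    fix i assume i: "i \<in> {..<d}"
    have "(\<Sum>j<d. cnj (v $ i) * mat_diag d (\<lambda>i. complex_of_real (s i)) $$ (i, j) * v $ j)
        = (\<Sum>j<d. if j = i then cnj (v $ i) * complex_of_real (s i) * v $ i else 0)"
      using i by (intro sum.cong refl) (auto simp: mat_diag_def)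
    also have "\<dots> = complex_of_real (s i * (cmod (v $ i))\<^sup>2)"
      using i by (simp add: complex_norm_square[symmetric] mult_ac)
    finally show "(\<Sum>j<d. cnj (v $ i) * mat_diag d (\<lambda>i. complex_of_real (s i)) $$ (i, j) * v $ j)
        = complex_of_real (s i * (cmod (v $ i))\<^sup>2)" .
  qed
  also have "\<dots> = complex_of_real (\<Sum>i<d. s i * (cmod (v $ i))\<^sup>2)"
    by (simp only: of_real_sum)
  finally have q: "quad_form d (mat_diag d (\<lambda>i. complex_of_real (s i))) v =
      complex_of_real (\<Sum>i<d. s i * (cmod (v $ i))\<^sup>2)" .
  show "Im (quad_form d (mat_diag d (\<lambda>i. complex_of_real (s i))) v) = 0"
    unfolding q by simp
  show "Re (quad_form d (mat_diag d (\<lambda>i. complex_of_real (s i))) v) \<ge> 0"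
    unfolding q Re_complex_of_real using assms by (intro sum_nonneg mult_nonneg_nonneg) auto
qed simp

section \<open>Trace norm of diagonal matrices\<close>

lemma hermitian_square_zero:
  fixes x :: "nat \<Rightarrow> nat \<Rightarrow> complex"
  assumes herm: "\<And>i k. i < d \<Longrightarrow> k < d \<Longrightarrow> x k i = cnj (x i k)"
    and sq: "(\<Sum>k<d. x i k * x k i) = 0" and ij: "i < d" "j < d"
  shows "x i j = 0"
proof -
  have "(\<Sum>k<d. x i k * x k i) = (\<Sum>k<d. complex_of_real ((cmod (x i k))\<^sup>2))"
  proof (rule sum.cong[OF refl])
    fix k assume "k \<in> {..<d}"
    then have "x k i = cnj (x i k)" using herm ij(1) by blast
    then show "x i k * x k i = complex_of_real ((cmod (x i k))\<^sup>2)" by (simp only: complex_norm_square)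
  qed
  also have "\<dots> = complex_of_real (\<Sum>k<d. (cmod (x i k))\<^sup>2)" by (simp only: of_real_sum)
  finally have "complex_of_real (\<Sum>k<d. (cmod (x i k))\<^sup>2) = 0" using sq by metis
  then have "(\<Sum>k<d. (cmod (x i k))\<^sup>2) = 0" by (simp only: of_real_eq_0_iff)
  then show ?thesis using ij(2) by (simp add: sum_nonneg_eq_0_iff)
qed

text \<open>For \<open>s \<ge> 0\<close> and \<open>S = diag s\<close>, a positive semidefinite \<open>P\<close> with \<open>P\<^sup>2 = S\<^sup>2\<close> commutes
  with \<open>S\<close>. Then \<open>X = P - S\<close> satisfies \<open>P X = - S X\<close>; positivity of \<open>P\<close> gives \<open>S X = 0\<close>, hence
  \<open>X\<^sup>2 = 0\<close>, and the Hermitian \<open>X\<close> vanishes.\<close>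

lemma psd_square_eq_mat_diag_commute:
  fixes s :: "nat \<Rightarrow> real"
  assumes s: "\<And>i. 0 \<le> s i" and Pc: "P \<in> carrier_mat d d"
    and PP: "P * P = mat_diag d (\<lambda>i. complex_of_real (s i) * complex_of_real (s i))"
    and ij: "i < d" "j < d"
  shows "P $$ (i, j) * complex_of_real (s j) = complex_of_real (s i) * P $$ (i, j)"
proof (cases "s i = s j")
  case False
  have "P * (P * P) = P * P * P" using Pc by simp
  then have "P * mat_diag d (\<lambda>i. complex_of_real (s i) * complex_of_real (s i)) =
      mat_diag d (\<lambda>i. complex_of_real (s i) * complex_of_real (s i)) * P"
    unfolding PP .
  from arg_cong[OF this, of "\<lambda>A. A $$ (i, j)"]
  have "P $$ (i, j) * complex_of_real (s j * s j) = P $$ (i, j) * complex_of_real (s i * s i)"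
    using ij by (simp add: mat_diag_mult_left[OF Pc] mat_diag_mult_right[OF Pc] mult.commute)
  moreover have "s j * s j \<noteq> s i * s i"
    using False s[of i] s[of j] by (metis power2_eq_square power2_eq_iff_nonneg)
  ultimately have "P $$ (i, j) = 0" by (simp flip: of_real_mult)
  then show ?thesis by simp
qed (simp add: mult.commute)

lemma psd_square_eq_mat_diag_mult_diff:
  fixes s :: "nat \<Rightarrow> real"
  assumes s: "\<And>i. 0 \<le> s i" and Pc: "P \<in> carrier_mat d d"
    and PP: "P * P = mat_diag d (\<lambda>i. complex_of_real (s i) * complex_of_real (s i))"
    and il: "i < d" "l < d"
  defines "x \<equiv> \<lambda>j. P $$ (j, l) - (if j = l then complex_of_real (s j) else 0)"
  shows "(\<Sum>j<d. P $$ (i, j) * x j) = - (complex_of_real (s i) * x i)"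
proof -
  have "(P * P) $$ (i, l) = (if i = l then complex_of_real (s i) * complex_of_real (s i) else 0)"
    using il by (simp add: PP mat_diag_def)
  then have PP_index: "(\<Sum>j<d. P $$ (i, j) * P $$ (j, l)) =
      (if i = l then complex_of_real (s i) * complex_of_real (s i) else 0)"
    using index_mult_mat_sum[OF Pc Pc il] by simp
  have "(\<Sum>j<d. P $$ (i, j) * x j) =
      (\<Sum>j<d. P $$ (i, j) * P $$ (j, l) - (if j = l then P $$ (i, j) * complex_of_real (s j) else 0))"
    by (intro sum.cong) (auto simp: x_def right_diff_distrib)
  also have "\<dots> = (\<Sum>j<d. P $$ (i, j) * P $$ (j, l)) - P $$ (i, l) * complex_of_real (s l)"
    using il by (simp add: sum_subtractf)
  also have "\<dots> = (if i = l then complex_of_real (s i) * complex_of_real (s i) else 0) -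
      complex_of_real (s i) * P $$ (i, l)"
    using PP_index psd_square_eq_mat_diag_commute[OF s Pc PP il] by simp
  also have "\<dots> = - (complex_of_real (s i) * x i)"
    by (cases "i = l") (simp_all add: x_def algebra_simps)
  finally show ?thesis .
qed

lemma psd_mult_eq_neg_diag:
  fixes s :: "nat \<Rightarrow> real"
  assumes P: "psd d P" and s: "\<And>i. 0 \<le> s i"
    and Py: "\<And>i. i < d \<Longrightarrow> (\<Sum>j<d. P $$ (i, j) * y j) = - (complex_of_real (s i) * y i)"
    and i: "i < d"
  shows "complex_of_real (s i) * y i = 0"
proof -
  have "quad_form d P (vec d y) = (\<Sum>i<d. cnj (y i) * (\<Sum>j<d. P $$ (i, j) * y j))"
    unfolding quad_form_def by (simp add: sum_distrib_left mult.assoc)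
  also have "\<dots> = - complex_of_real (\<Sum>i<d. s i * (cmod (y i))\<^sup>2)"
    unfolding of_real_sum sum_negf[symmetric] using Py
    by (intro sum.cong refl) (simp add: complex_norm_square[symmetric] mult_ac)
  finally have "(\<Sum>i<d. s i * (cmod (y i))\<^sup>2) \<le> 0"
    using psd_quad_form(2)[OF P, of "vec d y"] by simp
  moreover have "0 \<le> (\<Sum>i<d. s i * (cmod (y i))\<^sup>2)"
    using s by (intro sum_nonneg) simp
  ultimately have "(\<Sum>i<d. s i * (cmod (y i))\<^sup>2) = 0" by linarith
  then have "s i * (cmod (y i))\<^sup>2 = 0"
    using i s by (simp add: sum_nonneg_eq_0_iff)
  then show ?thesis by simp
qed

lemma psd_square_eq_mat_diag:
  fixes s :: "nat \<Rightarrow> real"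
  assumes s: "\<And>i. 0 \<le> s i" and P: "psd d P"
    and PP: "P * P = mat_diag d (\<lambda>i. complex_of_real (s i) * complex_of_real (s i))"
  shows "P = mat_diag d (\<lambda>i. complex_of_real (s i))"
proof -
  define \<sigma> where "\<sigma> i = complex_of_real (s i)" for i
  define x where "x i j = P $$ (i, j) - (if i = j then \<sigma> i else 0)" for i j
  have Pc: "P \<in> carrier_mat d d" using P by (rule psd_carrier)
  have Px: "(\<Sum>j<d. P $$ (i, j) * x j l) = - (\<sigma> i * x i l)" if "i < d" "l < d" for i l
    unfolding x_def \<sigma>_def by (rule psd_square_eq_mat_diag_mult_diff[OF s Pc PP that])
  have \<sigma>x: "\<sigma> i * x i l = 0" if "i < d" "l < d" for i l
    unfolding \<sigma>_def
    by (rule psd_mult_eq_neg_diag[OF P s _ that(1)]) (use Px[OF _ that(2)] in \<open>simp add: \<sigma>_def\<close>)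
  have herm: "x k i = cnj (x i k)" if "i < d" "k < d" for i k
    using psd_hermitian[OF P that] by (simp add: x_def \<sigma>_def)
  have x0: "x i j = 0" if ij: "i < d" "j < d" for i j
  proof (rule hermitian_square_zero[OF herm _ ij])
    have "(\<Sum>k<d. x i k * x k i) = (\<Sum>k<d. P $$ (i, k) * x k i - (if k = i then \<sigma> i * x k i else 0))"
      by (intro sum.cong) (auto simp: x_def left_diff_distrib)
    also have "\<dots> = (\<Sum>k<d. P $$ (i, k) * x k i) - \<sigma> i * x i i"
      using ij(1) by (simp add: sum_subtractf)
    finally show "(\<Sum>k<d. x i k * x k i) = 0" using Px[OF ij(1) ij(1)] \<sigma>x[OF ij(1) ij(1)] by simp
  qed
  have "P $$ (i, j) = (if i = j then \<sigma> i else 0)" if "i < d" "j < d" for i j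
    using x0[OF that] unfolding x_def by (simp add: algebra_simps)
  then show ?thesis using Pc by (intro eq_matI) (simp_all add: mat_diag_def \<sigma>_def)
qed

lemma psd_sqrt_mat_diag:
  assumes "\<And>i. 0 \<le> s i"
  shows "psd_sqrt (mat_diag d (\<lambda>i. complex_of_real (s i) * complex_of_real (s i))) =
    mat_diag d (\<lambda>i. complex_of_real (s i))"
  unfolding psd_sqrt_def
proof (rule the_equality)
  have "dim_row (mat_diag d f) = d" for f :: "nat \<Rightarrow> complex" by (simp add: mat_diag_def)
  then show "psd (dim_row (mat_diag d (\<lambda>i. complex_of_real (s i) * complex_of_real (s i))))
      (mat_diag d (\<lambda>i. complex_of_real (s i))) \<and>
    mat_diag d (\<lambda>i. complex_of_real (s i)) * mat_diag d (\<lambda>i. complex_of_real (s i)) =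
      mat_diag d (\<lambda>i. complex_of_real (s i) * complex_of_real (s i))"
    using psd_mat_diag[OF assms] by simp
next
  fix P assume "psd (dim_row (mat_diag d (\<lambda>i. complex_of_real (s i) * complex_of_real (s i)))) P \<and>
    P * P = mat_diag d (\<lambda>i. complex_of_real (s i) * complex_of_real (s i))"
  moreover have "dim_row (mat_diag d (\<lambda>i. complex_of_real (s i) * complex_of_real (s i))) = d"
    by (simp add: mat_diag_def)
  ultimately show "P = mat_diag d (\<lambda>i. complex_of_real (s i))"
    using psd_square_eq_mat_diag[OF assms, of d P] by simp
qed

lemma trace_norm_mat_diag: "trace_norm (mat_diag d f) = (\<Sum>i<d. cmod (f i))"
proof -
  have "adj (mat_diag d f) = mat_diag d (\<lambda>i. cnj (f i))"
    by (intro eq_matI) (auto simp: adj_def mat_diag_def)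
  moreover have "cnj (f i) * f i = complex_of_real (cmod (f i)) * complex_of_real (cmod (f i))" for i
  proof -
    have "cnj (f i) * f i = complex_of_real ((cmod (f i))\<^sup>2)"
      by (simp only: complex_norm_square mult.commute)
    then show ?thesis by (simp add: power2_eq_square)
  qed
  ultimately have "adj (mat_diag d f) * mat_diag d f =
      mat_diag d (\<lambda>i. complex_of_real (cmod (f i)) * complex_of_real (cmod (f i)))"
    by simp
  then have "psd_sqrt (adj (mat_diag d f) * mat_diag d f) = mat_diag d (\<lambda>i. complex_of_real (cmod (f i)))"
    by (simp add: psd_sqrt_mat_diag)
  then show ?thesis unfolding trace_norm_def ctrace_def by (simp add: mat_diag_def Re_sum)
qed

lemma trace_norm_dephase:
  "A \<in> carrier_mat m m \<Longrightarrow> trace_norm (dephase A) = (\<Sum>i<m. cmod (A $$ (i, i)))"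
  by (simp add: dephase_eq_mat_diag trace_norm_mat_diag)

section \<open>Kraus representations\<close>

text \<open>\<open>K t\<close> lists the entries of the \<open>m \<times> n\<close> Kraus operator \<open>K\<^sub>t\<close>, so that
  \<open>\<Theta> \<rho> = (\<Sum>t\<in>T. K\<^sub>t \<rho> K\<^sub>t\<^sup>\<dagger>)\<close> on \<open>n \<times> n\<close> matrices.\<close>

definition kraus_rep ::
  "nat \<Rightarrow> nat \<Rightarrow> 'a set \<Rightarrow> ('a \<Rightarrow> nat \<Rightarrow> nat \<Rightarrow> complex) \<Rightarrow> (complex mat \<Rightarrow> complex mat) \<Rightarrow> bool"
  where "kraus_rep n m T K \<Theta> \<longleftrightarrow> (\<forall>\<rho>\<in>carrier_mat n n. \<Theta> \<rho> \<in> carrier_mat m m \<and>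
     (\<forall>i<m. \<forall>j<m. \<Theta> \<rho> $$ (i, j) = (\<Sum>t\<in>T. \<Sum>a<n. \<Sum>b<n. K t i a * \<rho> $$ (a, b) * cnj (K t j b))))"

lemma kraus_repD:
  assumes "kraus_rep n m T K \<Theta>" "\<rho> \<in> carrier_mat n n"
  shows "\<Theta> \<rho> \<in> carrier_mat m m"
    and "i < m \<Longrightarrow> j < m \<Longrightarrow>
      \<Theta> \<rho> $$ (i, j) = (\<Sum>t\<in>T. \<Sum>a<n. \<Sum>b<n. K t i a * \<rho> $$ (a, b) * cnj (K t j b))"
  using assms unfolding kraus_rep_def by auto

lemma kraus_rep_lin_map:
  assumes kr: "kraus_rep n m T K \<Theta>"
  shows "lin_map n m \<Theta>"
  unfolding lin_map_def
proof (intro conjI ballI allI)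
  fix A :: "complex mat" assume "A \<in> carrier_mat n n"
  then show "\<Theta> A \<in> carrier_mat m m" by (rule kraus_repD(1)[OF kr])
next
  fix A B :: "complex mat" assume A: "A \<in> carrier_mat n n" and B: "B \<in> carrier_mat n n"
  have c: "\<Theta> A \<in> carrier_mat m m" "\<Theta> B \<in> carrier_mat m m" "\<Theta> (A + B) \<in> carrier_mat m m"
    using A B by (simp_all add: kraus_repD(1)[OF kr])
  show "\<Theta> (A + B) = \<Theta> A + \<Theta> B"
  proof (rule eq_matI)
    fix i j assume "i < dim_row (\<Theta> A + \<Theta> B)" "j < dim_col (\<Theta> A + \<Theta> B)"
    then have ij: "i < m" "j < m" using c by auto
    have "\<Theta> (A + B) $$ (i, j) =
        (\<Sum>t\<in>T. \<Sum>a<n. \<Sum>b<n. K t i a * (A + B) $$ (a, b) * cnj (K t j b))"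
      using A B ij by (simp add: kraus_repD(2)[OF kr])
    also have "\<dots> = (\<Sum>t\<in>T. \<Sum>a<n. \<Sum>b<n. K t i a * A $$ (a, b) * cnj (K t j b)) +
        (\<Sum>t\<in>T. \<Sum>a<n. \<Sum>b<n. K t i a * B $$ (a, b) * cnj (K t j b))"
      using A B by (simp add: sum.distrib[symmetric] algebra_simps)
    also have "\<dots> = (\<Theta> A + \<Theta> B) $$ (i, j)"
      using A B ij c by (simp add: kraus_repD(2)[OF kr])
    finally show "\<Theta> (A + B) $$ (i, j) = (\<Theta> A + \<Theta> B) $$ (i, j)" .
  qed (use c in auto)
next
  fix A :: "complex mat" and c :: complex assume A: "A \<in> carrier_mat n n"
  have cA: "\<Theta> A \<in> carrier_mat m m" "\<Theta> (c \<cdot>\<^sub>m A) \<in> carrier_mat m m"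
    using A by (simp_all add: kraus_repD(1)[OF kr])
  show "\<Theta> (c \<cdot>\<^sub>m A) = c \<cdot>\<^sub>m \<Theta> A"
  proof (rule eq_matI)
    fix i j assume "i < dim_row (c \<cdot>\<^sub>m \<Theta> A)" "j < dim_col (c \<cdot>\<^sub>m \<Theta> A)"
    then have ij: "i < m" "j < m" using cA by auto
    have "\<Theta> (c \<cdot>\<^sub>m A) $$ (i, j) = (\<Sum>t\<in>T. \<Sum>a<n. \<Sum>b<n. K t i a * (c \<cdot>\<^sub>m A) $$ (a, b) * cnj (K t j b))"
      using A ij by (simp add: kraus_repD(2)[OF kr])
    also have "\<dots> = c * (\<Sum>t\<in>T. \<Sum>a<n. \<Sum>b<n. K t i a * A $$ (a, b) * cnj (K t j b))"
      using A by (simp add: sum_distrib_left mult_ac)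
    also have "\<dots> = (c \<cdot>\<^sub>m \<Theta> A) $$ (i, j)"
      using A ij cA by (simp add: kraus_repD(2)[OF kr])
    finally show "\<Theta> (c \<cdot>\<^sub>m A) $$ (i, j) = (c \<cdot>\<^sub>m \<Theta> A) $$ (i, j)" .
  qed (use cA in auto)
qed

lemma index_ampl:
  assumes "\<alpha> < k" "\<beta> < k" "i < m" "j < m"
  shows "ampl k n m \<Theta> X $$ (\<alpha> * m + i, \<beta> * m + j) = \<Theta> (blk n X \<alpha> \<beta>) $$ (i, j)"
  using assms block_index_less[of \<alpha> k i m] block_index_less[of \<beta> k j m] by (simp add: ampl_def)

lemma quad_form_ampl:
  "quad_form (k * m) (ampl k n m \<Theta> X) v = (\<Sum>\<alpha><k. \<Sum>\<beta><k. \<Sum>i<m. \<Sum>j<m.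
     cnj (v $ (\<alpha> * m + i)) * \<Theta> (blk n X \<alpha> \<beta>) $$ (i, j) * v $ (\<beta> * m + j))"
proof -
  have "quad_form (k * m) (ampl k n m \<Theta> X) v = (\<Sum>\<alpha><k. \<Sum>i<m. \<Sum>\<beta><k. \<Sum>j<m.
     cnj (v $ (\<alpha> * m + i)) * \<Theta> (blk n X \<alpha> \<beta>) $$ (i, j) * v $ (\<beta> * m + j))"
    unfolding quad_form_def sum_lessThan_mult_split by (intro sum.cong refl) (simp add: index_ampl)
  also have "\<dots> = (\<Sum>\<alpha><k. \<Sum>\<beta><k. \<Sum>i<m. \<Sum>j<m.
     cnj (v $ (\<alpha> * m + i)) * \<Theta> (blk n X \<alpha> \<beta>) $$ (i, j) * v $ (\<beta> * m + j))"
    by (rule sum.cong[OF refl], rule sum.swap)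
  finally show ?thesis .
qed

text \<open>Amplifying a map with Kraus operators \<open>K\<^sub>t\<close> by \<open>id\<^sub>k\<close> gives the Kraus operators
  \<open>id\<^sub>k \<otimes> K\<^sub>t\<close>; the vector \<open>w t\<close> below is \<open>(id\<^sub>k \<otimes> K\<^sub>t)\<^sup>\<dagger> v\<close>.\<close>

lemma quad_form_ampl_kraus:
  fixes k :: nat and v :: "complex vec"
  assumes kr: "kraus_rep n m T K \<Theta>"
  defines "w t \<equiv> vec (k * n) (\<lambda>r. \<Sum>i<m. v $ (r div n * m + i) * cnj (K t i (r mod n)))"
  shows "quad_form (k * m) (ampl k n m \<Theta> X) v = (\<Sum>t\<in>T. quad_form (k * n) X (w t))"
proof -
  define E where "E t \<alpha> \<beta> i j a b = cnj (v $ (\<alpha> * m + i)) * K t i a * X $$ (\<alpha> * n + a, \<beta> * n + b) *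
    cnj (K t j b) * v $ (\<beta> * m + j)" for t \<alpha> \<beta> i j a b
  have blk: "blk n X \<alpha> \<beta> \<in> carrier_mat n n" for \<alpha> \<beta> unfolding blk_def by simp
  have "quad_form (k * m) (ampl k n m \<Theta> X) v =
      (\<Sum>\<alpha><k. \<Sum>\<beta><k. \<Sum>i<m. \<Sum>j<m. \<Sum>t\<in>T. \<Sum>a<n. \<Sum>b<n. E t \<alpha> \<beta> i j a b)"
    unfolding quad_form_ampl E_def using kraus_repD(2)[OF kr blk]
    by (intro sum.cong refl) (simp add: blk_def sum_distrib_left sum_distrib_right mult.assoc)
  also have "\<dots> = (\<Sum>t\<in>T. \<Sum>\<alpha><k. \<Sum>\<beta><k. \<Sum>a<n. \<Sum>b<n. \<Sum>i<m. \<Sum>j<m. E t \<alpha> \<beta> i j a b)"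
    by (simp only: sum.swap[where B = T] sum.swap[where A = "{..<m}" and B = "{..<n}"])
  also have "\<dots> = (\<Sum>t\<in>T. quad_form (k * n) X (w t))"
  proof (rule sum.cong[OF refl])
    fix t
    have "quad_form (k * n) X (w t) = (\<Sum>\<alpha><k. \<Sum>a<n. \<Sum>\<beta><k. \<Sum>b<n. \<Sum>i<m. \<Sum>j<m. E t \<alpha> \<beta> i j a b)"
      unfolding quad_form_def sum_lessThan_mult_split
    proof (intro sum.cong refl)
      fix \<alpha> a \<beta> b assume "\<alpha> \<in> {..<k}" "a \<in> {..<n}" "\<beta> \<in> {..<k}" "b \<in> {..<n}"
      then have "\<alpha> * n + a < k * n" "\<beta> * n + b < k * n" "a < n" "b < n"
        by (auto intro: block_index_less)
      then show "cnj (w t $ (\<alpha> * n + a)) * X $$ (\<alpha> * n + a, \<beta> * n + b) * w t $ (\<beta> * n + b)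
         = (\<Sum>i<m. \<Sum>j<m. E t \<alpha> \<beta> i j a b)"
        unfolding E_def w_def by (simp add: sum_distrib_left sum_distrib_right mult_ac)
    qed
    also have "\<dots> = (\<Sum>\<alpha><k. \<Sum>\<beta><k. \<Sum>a<n. \<Sum>b<n. \<Sum>i<m. \<Sum>j<m. E t \<alpha> \<beta> i j a b)"
      by (simp only: sum.swap[where A = "{..<n}" and B = "{..<k}"])
    finally show "(\<Sum>\<alpha><k. \<Sum>\<beta><k. \<Sum>a<n. \<Sum>b<n. \<Sum>i<m. \<Sum>j<m. E t \<alpha> \<beta> i j a b) =
        quad_form (k * n) X (w t)" by simp
  qed
  finally show ?thesis .
qed

lemma kraus_rep_completely_positive:
  assumes "kraus_rep n m T K \<Theta>"
  shows "completely_positive n m \<Theta>"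
  unfolding completely_positive_def
proof (intro allI impI)
  fix k :: nat and X assume "1 \<le> k" and X: "psd (k * n) X"
  show "psd (k * m) (ampl k n m \<Theta> X)"
    unfolding psd_iff_quad_form quad_form_ampl_kraus[OF assms]
  proof (intro conjI ballI)
    show "ampl k n m \<Theta> X \<in> carrier_mat (k * m) (k * m)" unfolding ampl_def by simp
  next
    fix v :: "complex vec"
    show "Im (\<Sum>t\<in>T. quad_form (k * n) X (vec (k * n) (\<lambda>r. \<Sum>i<m. v $ (r div n * m + i) * cnj (K t i (r mod n))))) = 0"
      unfolding Im_sum using psd_quad_form(1)[OF X] by (intro sum.neutral) simp
    show "0 \<le> Re (\<Sum>t\<in>T. quad_form (k * n) X (vec (k * n) (\<lambda>r. \<Sum>i<m. v $ (r div n * m + i) * cnj (K t i (r mod n)))))"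
      unfolding Re_sum using psd_quad_form(2)[OF X] by (intro sum_nonneg) simp
  qed
qed

lemma kraus_rep_trace_preserving:
  assumes kr: "kraus_rep n m T K \<Theta>"
    and compl: "\<And>a b. a < n \<Longrightarrow> b < n \<Longrightarrow> (\<Sum>t\<in>T. \<Sum>i<m. cnj (K t i b) * K t i a) = (if a = b then 1 else 0)"
  shows "trace_preserving n \<Theta>"
  unfolding trace_preserving_def
proof
  fix \<rho> :: "complex mat" assume \<rho>: "\<rho> \<in> carrier_mat n n"
  have "ctrace (\<Theta> \<rho>) = (\<Sum>i<m. \<Sum>t\<in>T. \<Sum>a<n. \<Sum>b<n. K t i a * \<rho> $$ (a, b) * cnj (K t i b))"
    unfolding ctrace_def using kraus_repD[OF kr \<rho>] by (auto intro!: sum.cong)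
  also have "\<dots> = (\<Sum>a<n. \<Sum>b<n. \<Sum>t\<in>T. \<Sum>i<m. K t i a * \<rho> $$ (a, b) * cnj (K t i b))"
    by (simp only: sum.swap[where A = "{..<m}" and B = "{..<n}"] sum.swap[where A = T and B = "{..<n}"]
          sum.swap[where A = "{..<m}" and B = T])
  also have "\<dots> = (\<Sum>a<n. \<Sum>b<n. \<rho> $$ (a, b) * (\<Sum>t\<in>T. \<Sum>i<m. cnj (K t i b) * K t i a))"
    by (simp add: sum_distrib_left mult_ac)
  also have "\<dots> = (\<Sum>a<n. \<Sum>b<n. \<rho> $$ (a, b) * (if a = b then 1 else 0))"
    using compl by (intro sum.cong refl) auto
  also have "\<dots> = ctrace \<rho>"
    unfolding ctrace_def using \<rho> by (simp add: if_distrib cong: if_cong)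
  finally show "ctrace (\<Theta> \<rho>) = ctrace \<rho>" .
qed

lemma kraus_rep_quantum_channel:
  assumes "kraus_rep n m T K \<Theta>"
    and "\<And>a b. a < n \<Longrightarrow> b < n \<Longrightarrow> (\<Sum>t\<in>T. \<Sum>i<m. cnj (K t i b) * K t i a) = (if a = b then 1 else 0)"
  shows "quantum_channel n m \<Theta>"
  using assms kraus_rep_lin_map kraus_rep_completely_positive kraus_rep_trace_preserving
  unfolding quantum_channel_def by blast

lemma kraus_rep_diag_proj:
  assumes kr: "kraus_rep n m T K \<Theta>" and \<psi>: "\<psi> \<in> carrier_vec n" and i: "i < m"
  shows "\<Theta> (proj \<psi>) $$ (i, i) = (\<Sum>t\<in>T. (\<Sum>a<n. K t i a * \<psi> $ a) * cnj (\<Sum>b<n. K t i b * \<psi> $ b))"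
proof -
  have "\<Theta> (proj \<psi>) $$ (i, i) = (\<Sum>t\<in>T. \<Sum>a<n. \<Sum>b<n. K t i a * proj \<psi> $$ (a, b) * cnj (K t i b))"
    using kraus_repD(2)[OF kr _ i i] \<psi> by simp
  also have "\<dots> = (\<Sum>t\<in>T. (\<Sum>a<n. K t i a * \<psi> $ a) * cnj (\<Sum>b<n. K t i b * \<psi> $ b))"
    unfolding cnj_sum sum_product using \<psi> by (intro sum.cong refl) (simp add: mult_ac)
  finally show ?thesis .
qed

lemma kraus_rep_sandwich:
  assumes "V \<in> carrier_mat m n"
  shows "kraus_rep n m {()} (\<lambda>_ i a. V $$ (i, a)) (\<lambda>\<rho>. V * \<rho> * adj V)"
  unfolding kraus_rep_def
proof (intro ballI conjI allI impI)
  fix \<rho> :: "complex mat" assume \<rho>: "\<rho> \<in> carrier_mat n n"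
  show "V * \<rho> * adj V \<in> carrier_mat m m"
    using assms \<rho> adj_carrier[of V] by (metis carrier_matD(1,2) mult_carrier_mat)
  fix i j assume ij: "i < m" "j < m"
  show "(V * \<rho> * adj V) $$ (i, j) =
      (\<Sum>t\<in>{()}. \<Sum>a<n. \<Sum>b<n. V $$ (i, a) * \<rho> $$ (a, b) * cnj (V $$ (j, b)))"
    unfolding index_sandwich[OF assms \<rho> ij] by simp
qed

definition matrix_unit :: "complex \<Rightarrow> nat \<Rightarrow> nat \<Rightarrow> nat \<Rightarrow> nat \<Rightarrow> complex" where
  "matrix_unit c f g i a = (if i = f \<and> a = g then c else 0)"

lemma matrix_unit_sandwich:
  assumes "g < n"
  shows "(\<Sum>a<n. \<Sum>b<n. matrix_unit c f g i a * \<rho> $$ (a, b) * cnj (matrix_unit c f g j b))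
     = (if i = f \<and> j = f then c * cnj c * \<rho> $$ (g, g) else 0)"
proof -
  have "(\<Sum>a<n. \<Sum>b<n. matrix_unit c f g i a * \<rho> $$ (a, b) * cnj (matrix_unit c f g j b))
      = (\<Sum>a<n. \<Sum>b<n. if a = g \<and> b = g then
           (if i = f \<and> j = f then c * cnj c * \<rho> $$ (g, g) else 0) else 0)"
    unfolding matrix_unit_def by (intro sum.cong refl) (auto simp: mult_ac)
  also have "\<dots> = (\<Sum>a<n. if a = g then (if i = f \<and> j = f then c * cnj c * \<rho> $$ (g, g) else 0) else 0)"
    using assms by (intro sum.cong refl) auto
  finally show ?thesis using assms by simp
qed

lemma matrix_unit_gram:
  assumes "f < m"
  shows "(\<Sum>i<m. cnj (matrix_unit c f g i b) * matrix_unit c f g i a)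
     = (if a = g \<and> b = g then cnj c * c else 0)"
proof -
  have "(\<Sum>i<m. cnj (matrix_unit c f g i b) * matrix_unit c f g i a)
      = (\<Sum>i<m. if i = f then (if a = g \<and> b = g then cnj c * c else 0) else 0)"
    unfolding matrix_unit_def by (intro sum.cong refl) auto
  then show ?thesis using assms by simp
qed

lemma kraus_rep_add_outside_weight:
  assumes kr: "kraus_rep n m T K \<Theta>" and T: "finite T" and m: "0 < m"
  shows "kraus_rep n m (T <+> {N..<n}) (case_sum K (\<lambda>s. matrix_unit 1 0 s))
    (\<lambda>\<rho>. \<Theta> \<rho> + outside_weight n N \<rho> \<cdot>\<^sub>m ket0bra0 m)"
  unfolding kraus_rep_def
proof (intro ballI conjI allI impI)
  fix \<rho> :: "complex mat" assume \<rho>: "\<rho> \<in> carrier_mat n n"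
  show "\<Theta> \<rho> + outside_weight n N \<rho> \<cdot>\<^sub>m ket0bra0 m \<in> carrier_mat m m"
    using kraus_repD(1)[OF kr \<rho>] by (simp add: ket0bra0_def)
  fix i j assume ij: "i < m" "j < m"
  have "(outside_weight n N \<rho> \<cdot>\<^sub>m ket0bra0 m) $$ (i, j) =
      (\<Sum>s\<in>{N..<n}. \<Sum>a<n. \<Sum>b<n. matrix_unit 1 0 s i a * \<rho> $$ (a, b) * cnj (matrix_unit 1 0 s j b))"
    using ij by (cases "i = 0 \<and> j = 0") (auto simp: matrix_unit_sandwich outside_weight_def ket0bra0_def)
  then show "(\<Theta> \<rho> + outside_weight n N \<rho> \<cdot>\<^sub>m ket0bra0 m) $$ (i, j) =
      (\<Sum>t\<in>T <+> {N..<n}. \<Sum>a<n. \<Sum>b<n. case_sum K (\<lambda>s. matrix_unit 1 0 s) t i a * \<rho> $$ (a, b) *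
        cnj (case_sum K (\<lambda>s. matrix_unit 1 0 s) t j b))"
    using ij T kraus_repD[OF kr \<rho>] by (simp add: sum.Plus ket0bra0_def)
qed

lemma quantum_channel_add_outside_weight:
  assumes kr: "kraus_rep n m T K \<Theta>" and T: "finite T" and m: "0 < m"
    and compl: "\<And>a b. a < n \<Longrightarrow> b < n \<Longrightarrow>
      (\<Sum>t\<in>T. \<Sum>i<m. cnj (K t i b) * K t i a) = (if a = b \<and> a < N then 1 else 0)"
  shows "quantum_channel n m (\<lambda>\<rho>. \<Theta> \<rho> + outside_weight n N \<rho> \<cdot>\<^sub>m ket0bra0 m)"
proof (rule kraus_rep_quantum_channel[OF kraus_rep_add_outside_weight[OF kr T m]])
  fix a b assume ab: "a < n" "b < n"
  have "(\<Sum>s\<in>{N..<n}. \<Sum>i<m. cnj (matrix_unit 1 0 s i b) * matrix_unit 1 0 s i a) =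
      (\<Sum>s\<in>{N..<n}. if s = a then (if a = b then 1 else 0) else 0)"
    using m by (intro sum.cong refl) (auto simp: matrix_unit_gram)
  also have "\<dots> = (if a = b \<and> N \<le> a then 1 else 0)" using ab by auto
  finally show "(\<Sum>t\<in>T <+> {N..<n}. \<Sum>i<m. cnj (case_sum K (\<lambda>s. matrix_unit 1 0 s) t i b) *
      case_sum K (\<lambda>s. matrix_unit 1 0 s) t i a) = (if a = b then 1 else 0)"
    using compl[OF ab] T by (simp add: sum.Plus)
qed

lemma quantum_channel_carrier:
  "quantum_channel n m \<Theta> \<Longrightarrow> A \<in> carrier_mat n n \<Longrightarrow> \<Theta> A \<in> carrier_mat m m"
  unfolding quantum_channel_def lin_map_def by auto

lemma ampl_one:
  assumes "\<rho> \<in> carrier_mat n n" "\<Theta> \<rho> \<in> carrier_mat m m"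
  shows "ampl 1 n m \<Theta> \<rho> = \<Theta> \<rho>"
proof -
  have "blk n \<rho> 0 0 = \<rho>" using assms(1) by (intro eq_matI) (auto simp: blk_def)
  then show ?thesis using assms(2) by (intro eq_matI) (auto simp: ampl_def)
qed

lemma quantum_channel_psd:
  assumes Q: "quantum_channel n m \<Theta>" and \<rho>: "psd n \<rho>"
  shows "psd m (\<Theta> \<rho>)"
proof -
  have "\<rho> \<in> carrier_mat n n" using \<rho> by (rule psd_carrier)
  moreover have "psd (1 * m) (ampl 1 n m \<Theta> \<rho>)"
    using Q \<rho> unfolding quantum_channel_def completely_positive_def by auto
  ultimately show ?thesis using ampl_one quantum_channel_carrier[OF Q] by auto
qed

lemma unit_vecs_c_carrier: "\<psi> \<in> unit_vecs_c n \<Longrightarrow> \<psi> \<in> carrier_vec n"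
  unfolding unit_vecs_c_def by auto

lemma ctrace_proj_unit:
  assumes "\<psi> \<in> unit_vecs_c n"
  shows "ctrace (proj \<psi>) = 1"
proof -
  have "ctrace (proj \<psi>) = (\<Sum>i<n. \<psi> $ i * cnj (\<psi> $ i))"
    using unit_vecs_c_carrier[OF assms] unfolding ctrace_def by simp
  also have "\<dots> = complex_of_real (\<Sum>i<n. (cmod (\<psi> $ i))\<^sup>2)"
    by (simp only: complex_norm_square of_real_sum)
  also have "\<dots> = 1" using assms unfolding unit_vecs_c_def by simp
  finally show ?thesis .
qed

lemma quantum_channel_proj_diag:
  assumes Q: "quantum_channel n m \<Theta>" and \<psi>: "\<psi> \<in> unit_vecs_c n" and i: "i < m"
  shows "Im (\<Theta> (proj \<psi>) $$ (i, i)) = 0" "0 \<le> Re (\<Theta> (proj \<psi>) $$ (i, i))"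
  using psd_diag[OF quantum_channel_psd[OF Q psd_proj[OF unit_vecs_c_carrier[OF \<psi>]]] i] by auto

lemma quantum_channel_proj_diag_sum:
  assumes Q: "quantum_channel n m \<Theta>" and \<psi>: "\<psi> \<in> unit_vecs_c n"
  shows "(\<Sum>i<m. Re (\<Theta> (proj \<psi>) $$ (i, i))) = 1"
proof -
  have \<psi>c: "\<psi> \<in> carrier_vec n" by (rule unit_vecs_c_carrier[OF \<psi>])
  have "ctrace (\<Theta> (proj \<psi>)) = 1"
    using Q \<psi>c ctrace_proj_unit[OF \<psi>] unfolding quantum_channel_def trace_preserving_def by simp
  then show ?thesis
    using quantum_channel_carrier[OF Q proj_carrier[OF \<psi>c]] unfolding ctrace_def by (simp flip: Re_sum)
qed

lemma blk_ampl:
  assumes "\<alpha> < k" "\<beta> < k" and \<Psi>: "\<And>A. A \<in> carrier_mat n n \<Longrightarrow> \<Psi> A \<in> carrier_mat n n"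
  shows "blk n (ampl k n n \<Psi> X) \<alpha> \<beta> = \<Psi> (blk n X \<alpha> \<beta>)"
proof -
  have c: "\<Psi> (blk n X \<alpha> \<beta>) \<in> carrier_mat n n" using \<Psi> by (simp add: blk_def)
  show ?thesis
  proof (rule eq_matI)
    fix i j assume "i < dim_row (\<Psi> (blk n X \<alpha> \<beta>))" "j < dim_col (\<Psi> (blk n X \<alpha> \<beta>))"
    then have "i < n" "j < n" using c by auto
    then show "blk n (ampl k n n \<Psi> X) \<alpha> \<beta> $$ (i, j) = \<Psi> (blk n X \<alpha> \<beta>) $$ (i, j)"
      using assms block_index_less[of \<alpha> k i n] block_index_less[of \<beta> k j n]
      by (simp add: blk_def ampl_def mult.commute)
  qed (use c in \<open>auto simp: blk_def\<close>)
qed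

lemma completely_positive_comp:
  assumes \<Theta>: "completely_positive n m \<Theta>" and \<Psi>: "completely_positive n n \<Psi>"
    and \<Psi>c: "\<And>A. A \<in> carrier_mat n n \<Longrightarrow> \<Psi> A \<in> carrier_mat n n"
  shows "completely_positive n m (\<Theta> \<circ> \<Psi>)"
  unfolding completely_positive_def
proof (intro allI impI)
  fix k :: nat and X assume k: "1 \<le> k" and X: "psd (k * n) X"
  have "psd (k * m) (ampl k n m \<Theta> (ampl k n n \<Psi> X))"
    using \<Theta> \<Psi> k X unfolding completely_positive_def by blast
  moreover have "ampl k n m \<Theta> (ampl k n n \<Psi> X) = ampl k n m (\<Theta> \<circ> \<Psi>) X"
  proof (rule eq_matI)
    fix r c assume "r < dim_row (ampl k n m (\<Theta> \<circ> \<Psi>) X)" "c < dim_col (ampl k n m (\<Theta> \<circ> \<Psi>) X)"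
    then have rc: "r < k * m" "c < k * m" unfolding ampl_def by auto
    then have "blk n (ampl k n n \<Psi> X) (r div m) (c div m) = \<Psi> (blk n X (r div m) (c div m))"
      by (intro blk_ampl \<Psi>c) (auto simp: less_mult_imp_div_less)
    then show "ampl k n m \<Theta> (ampl k n n \<Psi> X) $$ (r, c) = ampl k n m (\<Theta> \<circ> \<Psi>) X $$ (r, c)"
      using rc by (simp add: ampl_def[of k n m])
  qed (auto simp: ampl_def)
  ultimately show "psd (k * m) (ampl k n m (\<Theta> \<circ> \<Psi>) X)" by simp
qed

section \<open>Reduction to diagonals\<close>

definition diag_dist :: "nat \<Rightarrow> complex mat \<Rightarrow> complex mat \<Rightarrow> real" where
  "diag_dist m A B = (\<Sum>i<m. cmod (A $$ (i, i) - B $$ (i, i)))"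

lemma DI_channels_quantum_channel: "\<Phi> \<in> DI_channels n m \<Longrightarrow> quantum_channel n m \<Phi>"
  unfolding DI_channels_def by simp

lemma M_tilde_diamond_diag_dist:
  assumes Q: "quantum_channel n m \<Theta>"
  shows "M_tilde_diamond n m \<Theta> =
    (INF \<Phi>\<in>DI_channels n m. SUP \<psi>\<in>unit_vecs_c n. diag_dist m (\<Theta> (proj \<psi>)) (\<Phi> (proj \<psi>)))"
  unfolding M_tilde_diamond_def
proof (intro INF_cong SUP_cong refl)
  fix \<Phi> \<psi> assume \<Phi>: "\<Phi> \<in> DI_channels n m" and \<psi>: "\<psi> \<in> unit_vecs_c n"
  have "proj \<psi> \<in> carrier_mat n n" using unit_vecs_c_carrier[OF \<psi>] by simp
  then have c: "\<Theta> (proj \<psi>) \<in> carrier_mat m m" "\<Phi> (proj \<psi>) \<in> carrier_mat m m"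
    using quantum_channel_carrier Q DI_channels_quantum_channel[OF \<Phi>] by blast+
  then have "trace_norm (dephase (\<Theta> (proj \<psi>) - \<Phi> (proj \<psi>))) =
      (\<Sum>i<m. cmod ((\<Theta> (proj \<psi>) - \<Phi> (proj \<psi>)) $$ (i, i)))"
    by (intro trace_norm_dephase minus_carrier_mat)
  also have "\<dots> = diag_dist m (\<Theta> (proj \<psi>)) (\<Phi> (proj \<psi>))"
    unfolding diag_dist_def using c by (intro sum.cong refl) simp
  finally show "trace_norm (dephase (\<Theta> (proj \<psi>) - \<Phi> (proj \<psi>))) =
      diag_dist m (\<Theta> (proj \<psi>)) (\<Phi> (proj \<psi>))" .
qed

lemma cmod_quantum_channel_proj_diag:
  assumes "quantum_channel n m \<Theta>" "\<psi> \<in> unit_vecs_c n" "i < m"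
  shows "cmod (\<Theta> (proj \<psi>) $$ (i, i)) = Re (\<Theta> (proj \<psi>) $$ (i, i))"
  using quantum_channel_proj_diag[OF assms] by (simp add: cmod_eq_Re)

lemma diag_dist_le_2:
  assumes Q: "quantum_channel n m \<Theta>" "quantum_channel n m \<Phi>"
    and \<psi>: "\<psi> \<in> unit_vecs_c n" "\<phi> \<in> unit_vecs_c n"
  shows "diag_dist m (\<Theta> (proj \<psi>)) (\<Phi> (proj \<phi>)) \<le> 2"
proof -
  have "diag_dist m (\<Theta> (proj \<psi>)) (\<Phi> (proj \<phi>)) \<le>
      (\<Sum>i<m. cmod (\<Theta> (proj \<psi>) $$ (i, i)) + cmod (\<Phi> (proj \<phi>) $$ (i, i)))"
    unfolding diag_dist_def by (intro sum_mono norm_triangle_ineq4)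
  also have "\<dots> = (\<Sum>i<m. Re (\<Theta> (proj \<psi>) $$ (i, i))) + (\<Sum>i<m. Re (\<Phi> (proj \<phi>) $$ (i, i)))"
    by (simp add: sum.distrib cmod_quantum_channel_proj_diag[OF Q(1) \<psi>(1)]
        cmod_quantum_channel_proj_diag[OF Q(2) \<psi>(2)])
  also have "\<dots> = 2"
    using quantum_channel_proj_diag_sum[OF Q(1) \<psi>(1)] quantum_channel_proj_diag_sum[OF Q(2) \<psi>(2)] by simp
  finally show ?thesis .
qed

lemma unit_vec_unit_vecs_c:
  assumes "i < n"
  shows "unit_vec n i \<in> unit_vecs_c n"
proof -
  have "(\<Sum>j<n. (cmod (unit_vec n i $ j))\<^sup>2) = (\<Sum>j<n. if j = i then 1 else 0)"
    using assms by (intro sum.cong refl) auto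
  then show ?thesis using assms unfolding unit_vecs_c_def by simp
qed

lemma M_tilde_diamond_leI:
  assumes n: "1 \<le> n" and Q: "quantum_channel n m \<Theta>" and \<Phi>: "\<Phi> \<in> DI_channels n m"
    and b: "\<And>\<psi>. \<psi> \<in> unit_vecs_c n \<Longrightarrow> diag_dist m (\<Theta> (proj \<psi>)) (\<Phi> (proj \<psi>)) \<le> b"
  shows "M_tilde_diamond n m \<Theta> \<le> b"
proof -
  have ne: "unit_vecs_c n \<noteq> {}" using unit_vec_unit_vecs_c[of 0 n] n by auto
  have bdd: "bdd_above ((\<lambda>\<psi>. diag_dist m (\<Theta> (proj \<psi>)) (\<Phi>' (proj \<psi>))) ` unit_vecs_c n)"
    if "\<Phi>' \<in> DI_channels n m" for \<Phi>'
    using diag_dist_le_2[OF Q DI_channels_quantum_channel[OF that]] by (intro bdd_aboveI[of _ 2]) auto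
  have "0 \<le> (SUP \<psi>\<in>unit_vecs_c n. diag_dist m (\<Theta> (proj \<psi>)) (\<Phi>' (proj \<psi>)))"
    if "\<Phi>' \<in> DI_channels n m" for \<Phi>'
  proof -
    obtain \<psi> where \<psi>: "\<psi> \<in> unit_vecs_c n" using ne by auto
    have "0 \<le> diag_dist m (\<Theta> (proj \<psi>)) (\<Phi>' (proj \<psi>))" unfolding diag_dist_def by (simp add: sum_nonneg)
    also have "\<dots> \<le> (SUP \<psi>\<in>unit_vecs_c n. diag_dist m (\<Theta> (proj \<psi>)) (\<Phi>' (proj \<psi>)))"
      using \<psi> bdd[OF that] by (rule cSUP_upper)
    finally show ?thesis .
  qed
  then have "bdd_below ((\<lambda>\<Phi>'. SUP \<psi>\<in>unit_vecs_c n. diag_dist m (\<Theta> (proj \<psi>)) (\<Phi>' (proj \<psi>))) ` DI_channels n m)"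
    by (intro bdd_belowI[of _ 0]) auto
  then have "M_tilde_diamond n m \<Theta> \<le> (SUP \<psi>\<in>unit_vecs_c n. diag_dist m (\<Theta> (proj \<psi>)) (\<Phi> (proj \<psi>)))"
    unfolding M_tilde_diamond_diag_dist[OF Q] using \<Phi> by (rule cINF_lower)
  also have "\<dots> \<le> b" using ne b by (rule cSUP_least)
  finally show ?thesis .
qed

lemma M_tilde_diamond_geI:
  assumes Q: "quantum_channel n m \<Theta>" and ne: "DI_channels n m \<noteq> {}"
    and b: "\<And>\<Phi>. \<Phi> \<in> DI_channels n m \<Longrightarrow> \<exists>\<psi>\<in>unit_vecs_c n. b \<le> diag_dist m (\<Theta> (proj \<psi>)) (\<Phi> (proj \<psi>))"
  shows "b \<le> M_tilde_diamond n m \<Theta>"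
  unfolding M_tilde_diamond_diag_dist[OF Q]
proof (rule cINF_greatest[OF ne])
  fix \<Phi> assume \<Phi>: "\<Phi> \<in> DI_channels n m"
  have bdd: "bdd_above ((\<lambda>\<psi>. diag_dist m (\<Theta> (proj \<psi>)) (\<Phi> (proj \<psi>))) ` unit_vecs_c n)"
    using diag_dist_le_2[OF Q DI_channels_quantum_channel[OF \<Phi>]] by (intro bdd_aboveI[of _ 2]) auto
  obtain \<psi> where "\<psi> \<in> unit_vecs_c n" "b \<le> diag_dist m (\<Theta> (proj \<psi>)) (\<Phi> (proj \<psi>))"
    using b[OF \<Phi>] by auto
  then show "b \<le> (SUP \<psi>\<in>unit_vecs_c n. diag_dist m (\<Theta> (proj \<psi>)) (\<Phi> (proj \<psi>)))"
    using bdd by (intro cSUP_upper2)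
qed

section \<open>The upper bound\<close>

definition completely_depolarizing :: "nat \<Rightarrow> complex mat \<Rightarrow> complex mat" where
  "completely_depolarizing m \<rho> = mat m m (\<lambda>(i, j). if i = j then ctrace \<rho> / of_nat m else 0)"

lemma kraus_rep_completely_depolarizing:
  assumes m: "0 < m"
  shows "kraus_rep n m ({..<m} \<times> {..<n})
    (\<lambda>(s, t). matrix_unit (complex_of_real (1 / sqrt (real m))) s t) (completely_depolarizing m)"
  unfolding kraus_rep_def
proof (intro ballI conjI allI impI)
  fix \<rho> :: "complex mat" assume \<rho>: "\<rho> \<in> carrier_mat n n"
  show "completely_depolarizing m \<rho> \<in> carrier_mat m m" unfolding completely_depolarizing_def by simp
  fix i j assume ij: "i < m" "j < m"
  define c where "c = complex_of_real (1 / sqrt (real m))"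
  have cc: "c * cnj c = 1 / of_nat m" unfolding c_def using m by (simp flip: of_real_mult)
  have "(\<Sum>(s, t)\<in>{..<m} \<times> {..<n}. \<Sum>a<n. \<Sum>b<n. matrix_unit c s t i a * \<rho> $$ (a, b) * cnj (matrix_unit c s t j b))
      = (\<Sum>s<m. \<Sum>t<n. if i = s \<and> j = s then c * cnj c * \<rho> $$ (t, t) else 0)"
    by (simp add: sum.cartesian_product[symmetric] matrix_unit_sandwich)
  also have "\<dots> = (\<Sum>s<m. if s = i then (if i = j then (\<Sum>t<n. c * cnj c * \<rho> $$ (t, t)) else 0) else 0)"
    by (intro sum.cong refl) auto
  also have "\<dots> = completely_depolarizing m \<rho> $$ (i, j)"
    using ij \<rho> unfolding completely_depolarizing_def ctrace_def cc by (simp add: sum_divide_distrib)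
  finally show "completely_depolarizing m \<rho> $$ (i, j) =
      (\<Sum>st\<in>{..<m} \<times> {..<n}. \<Sum>a<n. \<Sum>b<n. (case st of (s, t) \<Rightarrow> matrix_unit c s t) i a * \<rho> $$ (a, b) *
        cnj ((case st of (s, t) \<Rightarrow> matrix_unit c s t) j b))"
    unfolding c_def by (simp add: split_def)
qed

lemma completely_depolarizing_quantum_channel:
  assumes m: "0 < m"
  shows "quantum_channel n m (completely_depolarizing m)"
proof (rule kraus_rep_quantum_channel[OF kraus_rep_completely_depolarizing[OF m]])
  fix a b assume ab: "a < n" "b < n"
  define c where "c = complex_of_real (1 / sqrt (real m))"
  have cc: "cnj c * c = 1 / of_nat m" unfolding c_def using m by (simp flip: of_real_mult)
  have "(\<Sum>(s, t)\<in>{..<m} \<times> {..<n}. \<Sum>i<m. cnj (matrix_unit c s t i b) * matrix_unit c s t i a)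
      = (\<Sum>s<m. \<Sum>t<n. if a = t \<and> b = t then cnj c * c else 0)"
    by (simp add: sum.cartesian_product[symmetric] matrix_unit_gram)
  also have "\<dots> = (\<Sum>s<m. \<Sum>t<n. if t = a then (if a = b then cnj c * c else 0) else 0)"
    by (intro sum.cong refl) auto
  also have "\<dots> = (\<Sum>s<m. if a = b then cnj c * c else 0)"
    using ab by simp
  also have "\<dots> = (if a = b then 1 else 0)" using m cc by simp
  finally show "(\<Sum>st\<in>{..<m} \<times> {..<n}. \<Sum>i<m.
      cnj ((case st of (s, t) \<Rightarrow> matrix_unit (complex_of_real (1 / sqrt (real m))) s t) i b) *
      (case st of (s, t) \<Rightarrow> matrix_unit (complex_of_real (1 / sqrt (real m))) s t) i a) =
      (if a = b then 1 else 0)"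
    unfolding c_def by (simp add: split_def)
qed

lemma completely_depolarizing_DI:
  assumes "0 < m"
  shows "completely_depolarizing m \<in> DI_channels n m"
proof -
  have "completely_depolarizing m (dephase A) = completely_depolarizing m A" if "A \<in> carrier_mat n n" for A
    unfolding completely_depolarizing_def ctrace_dephase[OF that] ..
  then show ?thesis unfolding DI_channels_def detection_incoherent_def
    using completely_depolarizing_quantum_channel[OF assms] by simp
qed

lemma sum_abs_diff_uniform_le:
  fixes p :: "nat \<Rightarrow> real"
  assumes m: "0 < m" and p: "\<And>i. i < m \<Longrightarrow> 0 \<le> p i" and s: "(\<Sum>i<m. p i) = 1"
  shows "(\<Sum>i<m. \<bar>p i - 1 / real m\<bar>) \<le> 2 * (real m - 1) / real m"
proof -
  have ab: "\<bar>x - c\<bar> = x + c - 2 * min x c" for x c :: real by (simp add: min_def abs_if)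
  have e: "(\<Sum>i<m. \<bar>p i - 1 / real m\<bar>) = 2 - 2 * (\<Sum>i<m. min (p i) (1 / real m))"
    unfolding ab using s m by (simp add: sum.distrib sum_subtractf sum_distrib_left)
  have "1 / real m \<le> (\<Sum>i<m. min (p i) (1 / real m))"
  proof (cases "\<exists>i<m. 1 / real m \<le> p i")
    case True
    then obtain i where i: "i < m" "1 / real m \<le> p i" by auto
    then have "1 / real m = min (p i) (1 / real m)" by simp
    also have "\<dots> \<le> (\<Sum>i<m. min (p i) (1 / real m))" using i p by (intro member_le_sum) auto
    finally show ?thesis .
  next
    case False
    then have "(\<Sum>i<m. min (p i) (1 / real m)) = (\<Sum>i<m. p i)" by (intro sum.cong) auto
    then show ?thesis using s m by (simp add: field_simps)
  qed
  then show ?thesis unfolding e using m by (simp add: field_simps)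
qed

lemma diag_dist_completely_depolarizing_le:
  assumes Q: "quantum_channel n m \<Theta>" and m: "0 < m" and \<psi>: "\<psi> \<in> unit_vecs_c n"
  shows "diag_dist m (\<Theta> (proj \<psi>)) (completely_depolarizing m (proj \<psi>)) \<le> 2 * (real m - 1) / real m"
proof -
  have "diag_dist m (\<Theta> (proj \<psi>)) (completely_depolarizing m (proj \<psi>)) =
      (\<Sum>i<m. \<bar>Re (\<Theta> (proj \<psi>) $$ (i, i)) - 1 / real m\<bar>)"
    unfolding diag_dist_def completely_depolarizing_def ctrace_proj_unit[OF \<psi>]
    using quantum_channel_proj_diag(1)[OF Q \<psi>] by (intro sum.cong refl) (simp add: cmod_eq_Re)
  also have "\<dots> \<le> 2 * (real m - 1) / real m"
    using quantum_channel_proj_diag(2)[OF Q \<psi>] quantum_channel_proj_diag_sum[OF Q \<psi>]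
    by (intro sum_abs_diff_uniform_le m)
  finally show ?thesis .
qed

lemma kraus_rep_dephase: "kraus_rep n n {..<n} (\<lambda>t. matrix_unit 1 t t) dephase"
  unfolding kraus_rep_def
proof (intro ballI conjI allI impI)
  fix \<rho> :: "complex mat" assume \<rho>: "\<rho> \<in> carrier_mat n n"
  show "dephase \<rho> \<in> carrier_mat n n" using \<rho> dephase_carrier[of \<rho>] by simp
  fix i j assume ij: "i < n" "j < n"
  have "(\<Sum>t<n. \<Sum>a<n. \<Sum>b<n. matrix_unit 1 t t i a * \<rho> $$ (a, b) * cnj (matrix_unit 1 t t j b))
      = (\<Sum>t<n. if t = i then (if i = j then \<rho> $$ (i, i) else 0) else 0)"
    by (intro sum.cong refl) (auto simp: matrix_unit_sandwich)
  then show "dephase \<rho> $$ (i, j) =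
      (\<Sum>t<n. \<Sum>a<n. \<Sum>b<n. matrix_unit 1 t t i a * \<rho> $$ (a, b) * cnj (matrix_unit 1 t t j b))"
    using ij \<rho> by (simp add: dephase_def)
qed

lemma comp_dephase_DI:
  assumes Q: "quantum_channel n m \<Theta>"
  shows "\<Theta> \<circ> dephase \<in> DI_channels n m"
proof -
  have dc: "dephase A \<in> carrier_mat n n" if "A \<in> carrier_mat n n" for A
    using that dephase_carrier[of A] by simp
  have "lin_map n m (\<Theta> \<circ> dephase)"
    using kraus_rep_lin_map[OF kraus_rep_dephase] Q dc unfolding quantum_channel_def lin_map_def by simp
  moreover have "completely_positive n m (\<Theta> \<circ> dephase)"
    using Q kraus_rep_completely_positive[OF kraus_rep_dephase] dc unfolding quantum_channel_def
    by (blast intro: completely_positive_comp)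
  moreover have "trace_preserving n (\<Theta> \<circ> dephase)"
    using Q dc ctrace_dephase unfolding quantum_channel_def trace_preserving_def by simp
  moreover have "detection_incoherent n (\<Theta> \<circ> dephase)"
    unfolding detection_incoherent_def using dephase_idem by simp
  ultimately show ?thesis unfolding DI_channels_def quantum_channel_def by simp
qed

abbreviation root_unity :: "nat \<Rightarrow> nat \<Rightarrow> complex" where
  "root_unity N x \<equiv> exp (2 * pi * \<i> * of_nat x / of_nat N)"

lemma root_unity_cis: "root_unity N x = cis (2 * pi * real x / real N)"
  by (simp add: cis_conv_exp mult_ac)

lemma norm_root_unity [simp]: "cmod (root_unity N x) = 1"
  unfolding root_unity_cis by simp

lemma cis_fraction_ne_1:
  assumes N: "0 < N" and ij: "i < N" "j < N" "i \<noteq> j"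
  shows "cis (2 * pi * (real i - real j) / real N) \<noteq> 1"
proof
  assume "cis (2 * pi * (real i - real j) / real N) = 1"
  then have "cos (2 * pi * (real i - real j) / real N) = 1" by (simp add: complex_eq_iff)
  then obtain z :: int where "2 * pi * (real i - real j) / real N = real_of_int z * 2 * pi"
    by (subst (asm) cos_one_2pi_int) blast
  then have "2 * pi * ((real i - real j) - real_of_int z * real N) = 0"
    using N by (simp add: field_simps)
  then have "real_of_int (int i - int j) = real_of_int (z * int N)" by simp
  then have z: "int i - int j = z * int N" by (simp only: of_int_eq_iff)
  then have "\<bar>z\<bar> * int N = \<bar>int i - int j\<bar>" by (simp add: abs_mult)
  also have "\<dots> < int N" using ij by linarith
  finally have "z = 0" using N by (smt (verit) mult_le_cancel_right1 of_nat_0_less_iff)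
  with z ij show False by simp
qed

lemma sum_root_unity_orthogonal:
  assumes N: "0 < N" and ij: "i < N" "j < N"
  shows "(\<Sum>k<N. root_unity N (k * i) * cnj (root_unity N (k * j))) = (if i = j then of_nat N else 0)"
proof -
  define w where "w = cis (2 * pi * (real i - real j) / real N)"
  have summand: "root_unity N (k * i) * cnj (root_unity N (k * j)) = w ^ k" for k
  proof -
    have "root_unity N (k * i) * cnj (root_unity N (k * j)) =
        cis (2 * pi * real (k * i) / real N - 2 * pi * real (k * j) / real N)"
      unfolding root_unity_cis by (simp add: cis_cnj cis_mult)
    also have "2 * pi * real (k * i) / real N - 2 * pi * real (k * j) / real N =
        real k * (2 * pi * (real i - real j) / real N)"
      using N by (simp add: field_simps)
    finally show ?thesis unfolding w_def by (simp add: DeMoivre)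
  qed
  show ?thesis
  proof (cases "i = j")
    case False
    have "real N * (2 * pi * (real i - real j) / real N) = real_of_int (int i - int j) * (2 * pi)"
      using N by (simp add: field_simps)
    then have "w ^ N = cis (real_of_int (int i - int j) * (2 * pi))"
      unfolding w_def DeMoivre by simp
    also have "\<dots> = 1"
      using cos_int_2pin[of "int i - int j"] sin_int_2pin[of "int i - int j"]
      by (simp only: complex_eq_iff cis.sel mult.commute) simp
    finally have "(\<Sum>k<N. w ^ k) = 0"
      using cis_fraction_ne_1[OF N ij False] unfolding w_def by (simp add: geometric_sum)
    then show ?thesis using False summand by simp
  next
    case True
    then have "w = 1" unfolding w_def by simp
    then show ?thesis unfolding summand using True by simp
  qed
qed

definition phase_vec :: "nat \<Rightarrow> nat \<Rightarrow> complex vec \<Rightarrow> complex vec" where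
  "phase_vec n k \<psi> = vec n (\<lambda>j. root_unity n (k * j) * \<psi> $ j)"

lemma phase_vec_unit: "\<psi> \<in> unit_vecs_c n \<Longrightarrow> phase_vec n k \<psi> \<in> unit_vecs_c n"
  unfolding unit_vecs_c_def phase_vec_def by (simp add: norm_mult)

lemma phase_vec_0: "\<psi> \<in> carrier_vec n \<Longrightarrow> phase_vec n 0 \<psi> = \<psi>"
  unfolding phase_vec_def by (intro eq_vecI) auto

fun mat_sum :: "nat \<Rightarrow> (nat \<Rightarrow> 'a :: comm_monoid_add mat) \<Rightarrow> nat \<Rightarrow> 'a mat" where
  "mat_sum d A 0 = 0\<^sub>m d d"
| "mat_sum d A (Suc K) = mat_sum d A K + A K"

lemma mat_sum_carrier: "(\<And>k. A k \<in> carrier_mat d d) \<Longrightarrow> mat_sum d A K \<in> carrier_mat d d"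
  by (induction K) auto

lemma index_mat_sum:
  assumes "\<And>k. A k \<in> carrier_mat d d" "i < d" "j < d"
  shows "mat_sum d A K $$ (i, j) = (\<Sum>k<K. A k $$ (i, j))"
proof (induction K)
  case (Suc K)
  have "dim_row (A K) = d" "dim_col (A K) = d" using assms(1)[of K] by auto
  then show ?case using Suc assms(2,3) by simp
qed (use assms in simp)

lemma lin_map_zero:
  assumes "lin_map n m \<Theta>"
  shows "\<Theta> (0\<^sub>m n n) = 0\<^sub>m m m"
proof -
  have c: "\<Theta> (0\<^sub>m n n) \<in> carrier_mat m m" using assms unfolding lin_map_def by auto
  have "\<Theta> (0\<^sub>m n n) = \<Theta> (0 \<cdot>\<^sub>m 0\<^sub>m n n)" by (intro arg_cong[where f = \<Theta>] eq_matI) auto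
  also have "\<dots> = 0 \<cdot>\<^sub>m \<Theta> (0\<^sub>m n n)"
    using assms zero_carrier_mat[of n n] unfolding lin_map_def by blast
  also have "\<dots> = 0\<^sub>m m m" using c by (intro eq_matI) auto
  finally show ?thesis .
qed

lemma lin_map_mat_sum:
  assumes L: "lin_map n m \<Theta>" and A: "\<And>k. A k \<in> carrier_mat n n"
  shows "\<Theta> (mat_sum n A K) = mat_sum m (\<lambda>k. \<Theta> (A k)) K"
proof (induction K)
  case 0
  then show ?case using lin_map_zero[OF L] by simp
next
  case (Suc K)
  then show ?case using L A mat_sum_carrier[of A n K] unfolding lin_map_def by simp
qed

lemma dephase_proj_eq_mean:
  assumes n: "0 < n" and \<psi>: "\<psi> \<in> carrier_vec n"
  shows "dephase (proj \<psi>) = (1 / of_nat n) \<cdot>\<^sub>m mat_sum n (\<lambda>k. proj (phase_vec n k \<psi>)) n"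
proof -
  have pc: "proj (phase_vec n k \<psi>) \<in> carrier_mat n n" for k unfolding phase_vec_def by simp
  have mc: "mat_sum n (\<lambda>k. proj (phase_vec n k \<psi>)) n \<in> carrier_mat n n"
    by (rule mat_sum_carrier[OF pc])
  show ?thesis
  proof (rule eq_matI)
    fix i j assume "i < dim_row ((1 / of_nat n) \<cdot>\<^sub>m mat_sum n (\<lambda>k. proj (phase_vec n k \<psi>)) n)"
      "j < dim_col ((1 / of_nat n) \<cdot>\<^sub>m mat_sum n (\<lambda>k. proj (phase_vec n k \<psi>)) n)"
    then have ij: "i < n" "j < n" using mc by auto
    have "((1 / of_nat n) \<cdot>\<^sub>m mat_sum n (\<lambda>k. proj (phase_vec n k \<psi>)) n) $$ (i, j)
        = (1 / of_nat n) * (\<Sum>k<n. proj (phase_vec n k \<psi>) $$ (i, j))"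
      using ij mc by (simp add: index_mat_sum[OF pc ij])
    also have "\<dots> = (1 / of_nat n) * (\<psi> $ i * cnj (\<psi> $ j) *
        (\<Sum>k<n. root_unity n (k * i) * cnj (root_unity n (k * j))))"
      using ij unfolding sum_distrib_left by (intro arg_cong2[where f = "(*)"] sum.cong refl)
        (simp add: phase_vec_def mult_ac)
    also have "\<dots> = dephase (proj \<psi>) $$ (i, j)"
      using n ij \<psi> unfolding sum_root_unity_orthogonal[OF n ij] by (simp add: dephase_def)
    finally show "dephase (proj \<psi>) $$ (i, j) =
        ((1 / of_nat n) \<cdot>\<^sub>m mat_sum n (\<lambda>k. proj (phase_vec n k \<psi>)) n) $$ (i, j)" by simp
  qed (use mc \<psi> in \<open>simp_all add: dephase_def\<close>)
qed

lemma comp_dephase_proj_diag: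
  assumes Q: "quantum_channel n m \<Theta>" and n: "0 < n" and \<psi>: "\<psi> \<in> carrier_vec n" and i: "i < m"
  shows "(\<Theta> \<circ> dephase) (proj \<psi>) $$ (i, i) = (1 / of_nat n) * (\<Sum>k<n. \<Theta> (proj (phase_vec n k \<psi>)) $$ (i, i))"
proof -
  have L: "lin_map n m \<Theta>" using Q unfolding quantum_channel_def by simp
  have pc: "proj (phase_vec n k \<psi>) \<in> carrier_mat n n" for k unfolding phase_vec_def by simp
  have Qc: "\<Theta> (proj (phase_vec n k \<psi>)) \<in> carrier_mat m m" for k
    using quantum_channel_carrier[OF Q pc] .
  have "(\<Theta> \<circ> dephase) (proj \<psi>) = (1 / of_nat n) \<cdot>\<^sub>m mat_sum m (\<lambda>k. \<Theta> (proj (phase_vec n k \<psi>))) n"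
    using dephase_proj_eq_mean[OF n \<psi>] L mat_sum_carrier[OF pc] lin_map_mat_sum[OF L pc]
    unfolding lin_map_def by simp
  moreover have "mat_sum m (\<lambda>k. \<Theta> (proj (phase_vec n k \<psi>))) n \<in> carrier_mat m m"
    by (rule mat_sum_carrier) (rule Qc)
  moreover have "mat_sum m (\<lambda>k. \<Theta> (proj (phase_vec n k \<psi>))) n $$ (i, i) =
      (\<Sum>k<n. \<Theta> (proj (phase_vec n k \<psi>)) $$ (i, i))"
    by (rule index_mat_sum) (rule Qc, rule i, rule i)
  ultimately show ?thesis using i by simp
qed

lemma diag_dist_comp_dephase_le:
  assumes Q: "quantum_channel n m \<Theta>" and n: "0 < n" and \<psi>: "\<psi> \<in> unit_vecs_c n"
  shows "diag_dist m (\<Theta> (proj \<psi>)) ((\<Theta> \<circ> dephase) (proj \<psi>)) \<le> 2 * (real n - 1) / real n"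
proof -
  define p where "p i = \<Theta> (proj \<psi>) $$ (i, i)" for i
  define q where "q k i = \<Theta> (proj (phase_vec n k \<psi>)) $$ (i, i)" for k i
  have sum_if_zero: "(\<Sum>k<n. if k = 0 then 0 else (2::real)) = 2 * real (n - 1)"
    by (induction n) (auto simp: of_nat_diff)
  have \<psi>c: "\<psi> \<in> carrier_vec n" by (rule unit_vecs_c_carrier[OF \<psi>])
  have "diag_dist m (\<Theta> (proj \<psi>)) ((\<Theta> \<circ> dephase) (proj \<psi>)) =
      (\<Sum>i<m. cmod ((1 / of_nat n) * (\<Sum>k<n. p i - q k i)))"
    unfolding diag_dist_def using n comp_dephase_proj_diag[OF Q n \<psi>c]
    by (intro sum.cong refl) (simp add: p_def q_def sum_subtractf right_diff_distrib)
  also have "\<dots> \<le> (\<Sum>i<m. (1 / real n) * (\<Sum>k<n. cmod (p i - q k i)))"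
    by (intro sum_mono) (simp add: norm_mult norm_divide norm_sum divide_right_mono)
  also have "\<dots> = (1 / real n) * (\<Sum>k<n. \<Sum>i<m. cmod (p i - q k i))"
    by (simp add: sum_distrib_left sum.swap[of _ "{..<m}"])
  also have "\<dots> \<le> (1 / real n) * (\<Sum>k<n. if k = 0 then 0 else 2)"
  proof (intro mult_left_mono sum_mono)
    fix k
    show "(\<Sum>i<m. cmod (p i - q k i)) \<le> (if k = 0 then 0 else 2)"
      using diag_dist_le_2[OF Q Q \<psi> phase_vec_unit[OF \<psi>]] phase_vec_0[OF \<psi>c]
      unfolding diag_dist_def p_def q_def by auto
  qed simp
  also have "\<dots> = 2 * (real n - 1) / real n"
    using n by (simp add: sum_if_zero of_nat_diff)
  finally show ?thesis .
qed

lemma M_tilde_diamond_upper_bound: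
  assumes n: "1 \<le> n" and m: "1 \<le> m" and Q: "quantum_channel n m \<Theta>"
  shows "M_tilde_diamond n m \<Theta> \<le> 2 * (real (min n m) - 1) / real (min n m)"
proof (cases "m \<le> n")
  case True
  then show ?thesis
    using M_tilde_diamond_leI[OF n Q completely_depolarizing_DI] diag_dist_completely_depolarizing_le[OF Q] m
    by simp
next
  case False
  then show ?thesis
    using M_tilde_diamond_leI[OF n Q comp_dephase_DI[OF Q]] diag_dist_comp_dephase_le[OF Q] n by simp
qed

section \<open>The Fourier channel and the Fourier measurement\<close>

lemma fourier_mat_carrier [simp]: "fourier_mat N \<in> carrier_mat N N"
  unfolding fourier_mat_def by simp

lemma index_fourier_mat:
  "a < N \<Longrightarrow> k < N \<Longrightarrow> fourier_mat N $$ (a, k) = root_unity N (a * k) / complex_of_real (sqrt (real N))"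
  unfolding fourier_mat_def by simp

lemma fourier_mat_sym: "a < N \<Longrightarrow> k < N \<Longrightarrow> fourier_mat N $$ (a, k) = fourier_mat N $$ (k, a)"
  by (simp add: index_fourier_mat mult.commute)

lemma cmod_fourier_mat: "0 < N \<Longrightarrow> a < N \<Longrightarrow> k < N \<Longrightarrow> (cmod (fourier_mat N $$ (a, k)))\<^sup>2 = 1 / real N"
  by (simp add: index_fourier_mat norm_divide power_divide)

lemma fourier_mat_orthonormal_cols:
  assumes N: "0 < N" and jk: "j < N" "k < N"
  shows "(\<Sum>a<N. cnj (fourier_mat N $$ (a, j)) * fourier_mat N $$ (a, k)) = (if j = k then 1 else 0)"
proof -
  define s where "s = complex_of_real (sqrt (real N))"
  have s: "s * cnj s = of_nat N" unfolding s_def using N by (simp flip: of_real_mult)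
  have "(\<Sum>a<N. cnj (fourier_mat N $$ (a, j)) * fourier_mat N $$ (a, k))
     = (\<Sum>a<N. root_unity N (a * k) * cnj (root_unity N (a * j))) / (s * cnj s)"
    unfolding sum_divide_distrib using jk
    by (intro sum.cong refl) (simp add: index_fourier_mat s_def[symmetric] field_simps)
  also have "\<dots> = (if j = k then 1 else 0)"
    unfolding sum_root_unity_orthogonal[OF N jk(2) jk(1)] s using N by auto
  finally show ?thesis .
qed

lemma fourier_mat_orthonormal_rows:
  assumes N: "0 < N" and jk: "j < N" "k < N"
  shows "(\<Sum>a<N. fourier_mat N $$ (j, a) * cnj (fourier_mat N $$ (k, a))) = (if j = k then 1 else 0)"
proof -
  have "(\<Sum>a<N. fourier_mat N $$ (j, a) * cnj (fourier_mat N $$ (k, a))) =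
      cnj (\<Sum>a<N. cnj (fourier_mat N $$ (a, j)) * fourier_mat N $$ (a, k))"
    unfolding cnj_sum using jk by (intro sum.cong refl) (simp add: fourier_mat_sym mult.commute)
  then show ?thesis using fourier_mat_orthonormal_cols[OF assms] by simp
qed

lemma embed_mult_fourier_mat:
  assumes "N \<le> d"
  shows "embed d N * fourier_mat N = mat d N (\<lambda>(a, t). if a < N then fourier_mat N $$ (a, t) else 0)"
proof (rule eq_matI)
  fix a t assume "a < dim_row (mat d N (\<lambda>(a, t). if a < N then fourier_mat N $$ (a, t) else 0))"
    "t < dim_col (mat d N (\<lambda>(a, t). if a < N then fourier_mat N $$ (a, t) else 0))"
  then have at: "a < d" "t < N" by auto
  have "(embed d N * fourier_mat N) $$ (a, t) = (\<Sum>l<N. (if a = l then 1 else 0) * fourier_mat N $$ (l, t))"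
    using at by (subst index_mult_mat_sum[of _ d N _ N]) (auto simp: embed_def)
  also have "\<dots> = (\<Sum>l<N. if l = a then fourier_mat N $$ (a, t) else 0)"
    by (intro sum.cong refl) auto
  finally show "(embed d N * fourier_mat N) $$ (a, t) =
      mat d N (\<lambda>(a, t). if a < N then fourier_mat N $$ (a, t) else 0) $$ (a, t)"
    using at by simp
qed (auto simp: embed_def fourier_mat_def)

lemma fourier_embedding:
  assumes "N \<le> m" "N \<le> n"
  shows "embed m N * fourier_mat N * adj (embed n N) =
    mat m n (\<lambda>(i, a). if i < N \<and> a < N then fourier_mat N $$ (i, a) else 0)"
proof (rule eq_matI)
  fix i a assume "i < dim_row (mat m n (\<lambda>(i, a). if i < N \<and> a < N then fourier_mat N $$ (i, a) else 0))"
    "a < dim_col (mat m n (\<lambda>(i, a). if i < N \<and> a < N then fourier_mat N $$ (i, a) else 0))"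
  then have ia: "i < m" "a < n" by auto
  have "(embed m N * fourier_mat N * adj (embed n N)) $$ (i, a) =
      (\<Sum>l<N. (if i < N then fourier_mat N $$ (i, l) else 0) * (if a = l then 1 else 0))"
    using ia unfolding embed_mult_fourier_mat[OF assms(1)]
    by (subst index_mult_mat_sum[of _ m N _ n]) (auto simp: adj_def embed_def intro!: sum.cong)
  also have "\<dots> = (\<Sum>l<N. if l = a then (if i < N then fourier_mat N $$ (i, a) else 0) else 0)"
    by (intro sum.cong refl) auto
  finally show "(embed m N * fourier_mat N * adj (embed n N)) $$ (i, a) =
      mat m n (\<lambda>(i, a). if i < N \<and> a < N then fourier_mat N $$ (i, a) else 0) $$ (i, a)"
    using ia by simp
qed (auto simp: embed_def fourier_mat_def)

lemma fourier_channel_eq: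
  fixes n m :: nat
  defines "N \<equiv> min n m"
  defines "V \<equiv> mat m n (\<lambda>(i, a). if i < N \<and> a < N then fourier_mat N $$ (i, a) else 0)"
  shows "fourier_channel n m = (\<lambda>\<rho>. V * \<rho> * adj V + outside_weight n N \<rho> \<cdot>\<^sub>m ket0bra0 m)"
proof -
  have le: "N \<le> m" "N \<le> n" by (simp_all add: N_def)
  show ?thesis
    unfolding fourier_channel_def Let_def N_def[symmetric] V_def fourier_embedding[OF le] by (rule refl)
qed

lemma fourier_channel_quantum_channel:
  assumes n: "1 \<le> n" and m: "1 \<le> m"
  shows "quantum_channel n m (fourier_channel n m)"
proof -
  define N where "N = min n m"
  define V where "V = mat m n (\<lambda>(i, a). if i < N \<and> a < N then fourier_mat N $$ (i, a) else 0)"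
  have N: "0 < N" "N \<le> m" unfolding N_def using n m by auto
  have "V \<in> carrier_mat m n" unfolding V_def by simp
  then show ?thesis
    unfolding fourier_channel_eq N_def[symmetric] V_def[symmetric]
  proof (rule quantum_channel_add_outside_weight[OF kraus_rep_sandwich])
    fix a b assume "a < n" "b < n"
    have "(\<Sum>i<m. cnj (V $$ (i, b)) * V $$ (i, a)) =
        (\<Sum>i<m. if i < N then (if a < N \<and> b < N then cnj (fourier_mat N $$ (i, b)) * fourier_mat N $$ (i, a) else 0) else 0)"
      using \<open>a < n\<close> \<open>b < n\<close> unfolding V_def by (intro sum.cong refl) auto
    also have "\<dots> = (if a < N \<and> b < N then (\<Sum>i<N. cnj (fourier_mat N $$ (i, b)) * fourier_mat N $$ (i, a)) else 0)"
      unfolding sum_lessThan_restrict[OF N(2)] by (cases "a < N \<and> b < N") auto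
    also have "\<dots> = (if a = b \<and> a < N then 1 else 0)"
      using fourier_mat_orthonormal_cols[OF N(1), of b a] by auto
    finally show "(\<Sum>t\<in>{()}. \<Sum>i<m. cnj (V $$ (i, b)) * V $$ (i, a)) = (if a = b \<and> a < N then 1 else 0)"
      by simp
  qed (use m in simp_all)
qed

definition column_measurement ::
  "nat \<Rightarrow> nat \<Rightarrow> nat \<Rightarrow> complex mat \<Rightarrow> complex mat \<Rightarrow> complex mat" where
  "column_measurement n m N B \<rho> = mat m m (\<lambda>(i, j). if i = j \<and> i < N then
     (\<Sum>a<n. \<Sum>b<n. cnj (B $$ (a, i)) * \<rho> $$ (a, b) * B $$ (b, i)) else 0)"

lemma kraus_rep_column_measurement:
  assumes "N \<le> m"
  shows "kraus_rep n m {..<N} (\<lambda>s i a. if i = s then cnj (B $$ (a, s)) else 0) (column_measurement n m N B)"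
  unfolding kraus_rep_def
proof (intro ballI conjI allI impI)
  fix \<rho> :: "complex mat" and i j
  show "column_measurement n m N B \<rho> \<in> carrier_mat m m" unfolding column_measurement_def by simp
  assume ij: "i < m" "j < m"
  have "(\<Sum>s<N. \<Sum>a<n. \<Sum>b<n. (if i = s then cnj (B $$ (a, s)) else 0) * \<rho> $$ (a, b) *
        cnj (if j = s then cnj (B $$ (b, s)) else 0)) =
      (\<Sum>s<N. if s = i then (if i = j then
        (\<Sum>a<n. \<Sum>b<n. cnj (B $$ (a, i)) * \<rho> $$ (a, b) * B $$ (b, i)) else 0) else 0)"
    by (intro sum.cong refl) auto
  then show "column_measurement n m N B \<rho> $$ (i, j) = (\<Sum>s<N. \<Sum>a<n. \<Sum>b<n.
      (if i = s then cnj (B $$ (a, s)) else 0) * \<rho> $$ (a, b) * cnj (if j = s then cnj (B $$ (b, s)) else 0))"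
    using ij unfolding column_measurement_def by auto
qed

lemma fourier_measurement_eq:
  fixes n m :: nat
  defines "N \<equiv> min n m"
  shows "fourier_measurement n m =
    (\<lambda>\<rho>. column_measurement n m N (embed n N * fourier_mat N) \<rho> + outside_weight n N \<rho> \<cdot>\<^sub>m ket0bra0 m)"
  unfolding fourier_measurement_def column_measurement_def Let_def N_def ..

lemma fourier_measurement_quantum_channel:
  assumes n: "1 \<le> n" and m: "1 \<le> m"
  shows "quantum_channel n m (fourier_measurement n m)"
proof -
  define N where "N = min n m"
  define B where "B = embed n N * fourier_mat N"
  have N: "0 < N" "N \<le> m" "N \<le> n" unfolding N_def using n m by auto
  have B: "B $$ (a, s) = (if a < N then fourier_mat N $$ (a, s) else 0)" if "a < n" "s < N" for a s
    unfolding B_def embed_mult_fourier_mat[OF N(3)] using that by simp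
  show ?thesis
    unfolding fourier_measurement_eq N_def[symmetric] B_def[symmetric]
  proof (rule quantum_channel_add_outside_weight[OF kraus_rep_column_measurement[OF N(2)]])
    fix a b assume ab: "a < n" "b < n"
    have "(\<Sum>s<N. \<Sum>i<m. cnj (if i = s then cnj (B $$ (b, s)) else 0) * (if i = s then cnj (B $$ (a, s)) else 0))
        = (\<Sum>s<N. B $$ (b, s) * cnj (B $$ (a, s)))"
      using N(2) by (intro sum.cong refl) (simp add: if_distrib if_distribR cong: if_cong)
    also have "\<dots> = (if a < N \<and> b < N then (\<Sum>s<N. fourier_mat N $$ (b, s) * cnj (fourier_mat N $$ (a, s))) else 0)"
      using ab by (cases "a < N \<and> b < N") (auto simp: B)
    also have "\<dots> = (if a = b \<and> a < N then 1 else 0)"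
      using fourier_mat_orthonormal_rows[OF N(1), of b a] by auto
    finally show "(\<Sum>s<N. \<Sum>i<m. cnj (if i = s then cnj (B $$ (b, s)) else 0) *
        (if i = s then cnj (B $$ (a, s)) else 0)) = (if a = b \<and> a < N then 1 else 0)" .
  qed (use m in simp_all)
qed

section \<open>The lower bound\<close>

definition zero_ext_vec :: "nat \<Rightarrow> nat \<Rightarrow> (nat \<Rightarrow> complex) \<Rightarrow> complex vec" where
  "zero_ext_vec n N f = vec n (\<lambda>a. if a < N then f a else 0)"

lemma zero_ext_vec_carrier [simp]: "zero_ext_vec n N f \<in> carrier_vec n"
  unfolding zero_ext_vec_def by simp

lemma zero_ext_vec_unit:
  assumes N: "0 < N" "N \<le> n" and f: "\<And>a. a < N \<Longrightarrow> (cmod (f a))\<^sup>2 = 1 / real N"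
  shows "zero_ext_vec n N f \<in> unit_vecs_c n"
proof -
  have "(\<Sum>a<n. (cmod (zero_ext_vec n N f $ a))\<^sup>2) = (\<Sum>a<n. if a < N then 1 / real N else 0)"
    using f unfolding zero_ext_vec_def by (intro sum.cong refl) auto
  also have "\<dots> = 1" unfolding sum_lessThan_restrict[OF N(2)] using N by simp
  finally show ?thesis unfolding unit_vecs_c_def by simp
qed

lemma dephase_proj_zero_ext_vec:
  assumes f: "\<And>a. a < N \<Longrightarrow> (cmod (f a))\<^sup>2 = 1 / real N"
  shows "dephase (proj (zero_ext_vec n N f)) = mat_diag n (\<lambda>i. if i < N then 1 / of_nat N else 0)"
proof -
  have "f i * cnj (f i) = 1 / of_nat N" if "i < N" for i
    using f[OF that] complex_norm_square[of "f i"] by simp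
  then show ?thesis by (intro eq_matI) (auto simp: dephase_def mat_diag_def zero_ext_vec_def)
qed

lemma outside_weight_proj_zero_ext_vec: "outside_weight n N (proj (zero_ext_vec n N f)) = 0"
  unfolding outside_weight_def zero_ext_vec_def by (intro sum.neutral) simp

lemma fourier_channel_diag:
  assumes n: "1 \<le> n" and m: "1 \<le> m" and k: "k < min n m" and i: "i < m"
  shows "fourier_channel n m (proj (zero_ext_vec n (min n m) (\<lambda>a. cnj (fourier_mat (min n m) $$ (a, k))))) $$ (i, i)
    = (if i = k then 1 else 0)"
proof -
  define N where "N = min n m"
  define V where "V = mat m n (\<lambda>(i, a). if i < N \<and> a < N then fourier_mat N $$ (i, a) else 0)"
  define \<psi> where "\<psi> = zero_ext_vec n N (\<lambda>a. cnj (fourier_mat N $$ (a, k)))"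
  have N: "0 < N" "N \<le> n" "k < N" unfolding N_def using n m k by auto
  have V: "V \<in> carrier_mat m n" unfolding V_def by simp
  have V\<psi>: "(\<Sum>a<n. V $$ (i, a) * \<psi> $ a) = (if i = k then 1 else 0)"
  proof -
    have "(\<Sum>a<n. V $$ (i, a) * \<psi> $ a) =
        (\<Sum>a<n. if a < N then (if i < N then fourier_mat N $$ (i, a) * cnj (fourier_mat N $$ (k, a)) else 0) else 0)"
      unfolding V_def \<psi>_def zero_ext_vec_def using i N by (intro sum.cong refl) (auto simp: fourier_mat_sym)
    also have "\<dots> = (if i < N then (\<Sum>a<N. fourier_mat N $$ (i, a) * cnj (fourier_mat N $$ (k, a))) else 0)"
      unfolding sum_lessThan_restrict[OF N(2)] by (cases "i < N") auto
    also have "\<dots> = (if i = k then 1 else 0)"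
      using fourier_mat_orthonormal_rows[OF N(1) _ N(3), of i] N(3) by auto
    finally show ?thesis .
  qed
  have "fourier_channel n m (proj \<psi>) $$ (i, i) = (V * proj \<psi> * adj V) $$ (i, i)"
    unfolding fourier_channel_eq N_def[symmetric] V_def[symmetric] \<psi>_def outside_weight_proj_zero_ext_vec
    using i V by (simp add: ket0bra0_def)
  also have "\<dots> = (\<Sum>t\<in>{()}. (\<Sum>a<n. V $$ (i, a) * \<psi> $ a) * cnj (\<Sum>b<n. V $$ (i, b) * \<psi> $ b))"
    unfolding \<psi>_def by (rule kraus_rep_diag_proj[OF kraus_rep_sandwich[OF V] zero_ext_vec_carrier i])
  also have "\<dots> = (if i = k then 1 else 0)" unfolding V\<psi> by simp
  finally show ?thesis unfolding \<psi>_def N_def .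
qed

lemma column_measurement_proj_diag:
  assumes "\<psi> \<in> carrier_vec n" "i < m"
  shows "column_measurement n m N B (proj \<psi>) $$ (i, i) = (if i < N then
    (\<Sum>a<n. cnj (B $$ (a, i)) * \<psi> $ a) * cnj (\<Sum>b<n. cnj (B $$ (b, i)) * \<psi> $ b) else 0)"
  unfolding column_measurement_def cnj_sum sum_product using assms
  by (simp, intro impI sum.cong refl) (simp add: mult_ac)

lemma fourier_measurement_diag:
  assumes n: "1 \<le> n" and m: "1 \<le> m" and k: "k < min n m" and i: "i < m"
  shows "fourier_measurement n m (proj (zero_ext_vec n (min n m) (\<lambda>a. fourier_mat (min n m) $$ (a, k)))) $$ (i, i)
    = (if i = k then 1 else 0)"
proof -
  define N where "N = min n m"
  define B where "B = embed n N * fourier_mat N"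
  define \<psi> where "\<psi> = zero_ext_vec n N (\<lambda>a. fourier_mat N $$ (a, k))"
  have N: "0 < N" "N \<le> n" "N \<le> m" "k < N" unfolding N_def using n m k by auto
  have \<psi>c: "\<psi> \<in> carrier_vec n" unfolding \<psi>_def by simp
  have B\<psi>: "(\<Sum>a<n. cnj (B $$ (a, i)) * \<psi> $ a) = (if i = k then 1 else 0)" if "i < N"
  proof -
    have "(\<Sum>a<n. cnj (B $$ (a, i)) * \<psi> $ a) =
        (\<Sum>a<n. if a < N then cnj (fourier_mat N $$ (a, i)) * fourier_mat N $$ (a, k) else 0)"
      unfolding B_def embed_mult_fourier_mat[OF N(2)] \<psi>_def zero_ext_vec_def using that
      by (intro sum.cong refl) auto
    also have "\<dots> = (if i = k then 1 else 0)"
      unfolding sum_lessThan_restrict[OF N(2)] by (rule fourier_mat_orthonormal_cols[OF N(1) that N(4)])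
    finally show ?thesis .
  qed
  have "fourier_measurement n m (proj \<psi>) $$ (i, i) = column_measurement n m N B (proj \<psi>) $$ (i, i)"
    unfolding fourier_measurement_eq N_def[symmetric] B_def[symmetric] \<psi>_def outside_weight_proj_zero_ext_vec
    using i by (simp add: ket0bra0_def column_measurement_def)
  also have "\<dots> = (if i = k then 1 else 0)"
    unfolding column_measurement_proj_diag[OF \<psi>c i] using B\<psi> N(4) by (auto simp del: cnj_sum)
  finally show ?thesis unfolding \<psi>_def N_def .
qed

lemma DI_channel_diag_eq:
  assumes \<Phi>: "\<Phi> \<in> DI_channels n m" and A: "A \<in> carrier_mat n n" and B: "B \<in> carrier_mat n n"
    and AB: "dephase A = dephase B" and i: "i < m"
  shows "\<Phi> A $$ (i, i) = \<Phi> B $$ (i, i)"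
proof -
  have di: "dephase (\<Phi> C) = dephase (\<Phi> (dephase C))" if "C \<in> carrier_mat n n" for C
    using \<Phi> that unfolding DI_channels_def detection_incoherent_def by blast
  have "dephase (\<Phi> A) = dephase (\<Phi> B)" unfolding di[OF A] di[OF B] AB ..
  then have "dephase (\<Phi> A) $$ (i, i) = dephase (\<Phi> B) $$ (i, i)" by (rule arg_cong)
  moreover have "\<Phi> A \<in> carrier_mat m m" "\<Phi> B \<in> carrier_mat m m"
    using quantum_channel_carrier[OF DI_channels_quantum_channel[OF \<Phi>]] A B by auto
  ultimately show ?thesis using i by (simp add: dephase_def)
qed

lemma exists_le_inverse_of_sum_eq_1:
  fixes q :: "nat \<Rightarrow> real"
  assumes N: "0 < N" "N \<le> m" and q: "\<And>i. i < m \<Longrightarrow> 0 \<le> q i" "(\<Sum>i<m. q i) = 1"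
  shows "\<exists>k<N. q k \<le> 1 / real N"
proof (rule ccontr)
  assume "\<not> (\<exists>k<N. q k \<le> 1 / real N)"
  then have "(\<Sum>k<N. 1 / real N) < (\<Sum>k<N. q k)" using N by (intro sum_strict_mono) auto
  also have "\<dots> \<le> (\<Sum>k<m. q k)" using N q by (intro sum_mono2) auto
  finally show False using q N by simp
qed

lemma diag_dist_basis_ge:
  assumes A: "\<And>i. i < m \<Longrightarrow> A $$ (i, i) = (if i = k then 1 else 0)" and k: "k < m"
    and B: "(\<Sum>i<m. Re (B $$ (i, i))) = 1"
  shows "2 - 2 * Re (B $$ (k, k)) \<le> diag_dist m A B"
proof -
  have "(\<Sum>i<m. Re (B $$ (i, i)) + (if i = k then 1 - 2 * Re (B $$ (i, i)) else 0)) \<le> diag_dist m A B"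
    unfolding diag_dist_def
  proof (rule sum_mono)
    fix i assume "i \<in> {..<m}"
    then show "Re (B $$ (i, i)) + (if i = k then 1 - 2 * Re (B $$ (i, i)) else 0) \<le> cmod (A $$ (i, i) - B $$ (i, i))"
      using A complex_Re_le_cmod[of "1 - B $$ (i, i)"] complex_Re_le_cmod[of "B $$ (i, i)"]
      by (cases "i = k") auto
  qed
  moreover have "(\<Sum>i<m. Re (B $$ (i, i)) + (if i = k then 1 - 2 * Re (B $$ (i, i)) else 0)) =
      2 - 2 * Re (B $$ (k, k))"
    using B k by (simp add: sum.distrib)
  ultimately show ?thesis by simp
qed

lemma DI_channel_diag_dist_ge:
  assumes Q: "quantum_channel n m \<Theta>" and \<Phi>: "\<Phi> \<in> DI_channels n m" and N: "0 < N" "N \<le> n" "N \<le> m"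
    and f: "\<And>a k. a < N \<Longrightarrow> k < N \<Longrightarrow> (cmod (f a k))\<^sup>2 = 1 / real N"
    and out: "\<And>k i. k < N \<Longrightarrow> i < m \<Longrightarrow>
      \<Theta> (proj (zero_ext_vec n N (\<lambda>a. f a k))) $$ (i, i) = (if i = k then 1 else 0)"
  shows "\<exists>k<N. 2 * (real N - 1) / real N \<le>
    diag_dist m (\<Theta> (proj (zero_ext_vec n N (\<lambda>a. f a k)))) (\<Phi> (proj (zero_ext_vec n N (\<lambda>a. f a k))))"
proof -
  define \<psi> where "\<psi> k = zero_ext_vec n N (\<lambda>a. f a k)" for k
  define q where "q i = Re (\<Phi> (proj (\<psi> 0)) $$ (i, i))" for i
  have \<Phi>Q: "quantum_channel n m \<Phi>" by (rule DI_channels_quantum_channel[OF \<Phi>])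
  have \<psi>: "\<psi> k \<in> unit_vecs_c n" if "k < N" for k
    unfolding \<psi>_def using N f that by (intro zero_ext_vec_unit) auto
  have same: "\<Phi> (proj (\<psi> k)) $$ (i, i) = \<Phi> (proj (\<psi> 0)) $$ (i, i)" if "k < N" "i < m" for k i
    using that N f unfolding \<psi>_def
    by (intro DI_channel_diag_eq[OF \<Phi>]) (simp_all add: dephase_proj_zero_ext_vec)
  have "0 \<le> q i" if "i < m" for i
    unfolding q_def using quantum_channel_proj_diag(2)[OF \<Phi>Q \<psi> that] N by simp
  moreover have "(\<Sum>i<m. q i) = 1"
    unfolding q_def using quantum_channel_proj_diag_sum[OF \<Phi>Q \<psi>] N by simp
  ultimately obtain k where k: "k < N" "q k \<le> 1 / real N"
    using exists_le_inverse_of_sum_eq_1[OF N(1) N(3)] by blast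
  have "2 * (real N - 1) / real N = 2 - 2 * (1 / real N)" using N by (simp add: field_simps)
  also have "\<dots> \<le> 2 - 2 * q k" using k(2) by linarith
  also have "\<dots> = 2 - 2 * Re (\<Phi> (proj (\<psi> k)) $$ (k, k))"
    unfolding q_def using same[OF k(1), of k] k N by simp
  also have "\<dots> \<le> diag_dist m (\<Theta> (proj (\<psi> k))) (\<Phi> (proj (\<psi> k)))"
  proof (rule diag_dist_basis_ge)
    show "\<Theta> (proj (\<psi> k)) $$ (i, i) = (if i = k then 1 else 0)" if "i < m" for i
      unfolding \<psi>_def using out k(1) that .
    show "(\<Sum>i<m. Re (\<Phi> (proj (\<psi> k)) $$ (i, i))) = 1"
      using quantum_channel_proj_diag_sum[OF \<Phi>Q \<psi>[OF k(1)]] .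
  qed (use k N in simp)
  finally show ?thesis using k(1) unfolding \<psi>_def by blast
qed

lemma M_tilde_diamond_lower_bound:
  assumes Q: "quantum_channel n m \<Theta>" and N: "0 < N" "N \<le> n" "N \<le> m"
    and f: "\<And>a k. a < N \<Longrightarrow> k < N \<Longrightarrow> (cmod (f a k))\<^sup>2 = 1 / real N"
    and out: "\<And>k i. k < N \<Longrightarrow> i < m \<Longrightarrow>
      \<Theta> (proj (zero_ext_vec n N (\<lambda>a. f a k))) $$ (i, i) = (if i = k then 1 else 0)"
  shows "2 * (real N - 1) / real N \<le> M_tilde_diamond n m \<Theta>"
proof (rule M_tilde_diamond_geI[OF Q])
  show "DI_channels n m \<noteq> {}" using completely_depolarizing_DI[of m n] N by auto
  fix \<Phi> assume "\<Phi> \<in> DI_channels n m"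
  then obtain k where k: "k < N" and ge: "2 * (real N - 1) / real N \<le>
      diag_dist m (\<Theta> (proj (zero_ext_vec n N (\<lambda>a. f a k)))) (\<Phi> (proj (zero_ext_vec n N (\<lambda>a. f a k))))"
    using DI_channel_diag_dist_ge[OF Q _ N f out] by blast
  have "zero_ext_vec n N (\<lambda>a. f a k) \<in> unit_vecs_c n"
    using N f k by (intro zero_ext_vec_unit) auto
  then show "\<exists>\<psi>\<in>unit_vecs_c n. 2 * (real N - 1) / real N \<le> diag_dist m (\<Theta> (proj \<psi>)) (\<Phi> (proj \<psi>))"
    using ge by blast
qed

theorem proposition10:
  fixes n m :: nat
  assumes "n \<ge> 1" and "m \<ge> 1"
  defines "N0 \<equiv> min n m"
  shows "(\<forall>\<Theta>. quantum_channel n m \<Theta> \<longrightarrow>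
            M_tilde_diamond n m \<Theta> \<le> 2 * (real N0 - 1) / real N0)
       \<and> quantum_channel n m (fourier_channel n m)
       \<and> M_tilde_diamond n m (fourier_channel n m) = 2 * (real N0 - 1) / real N0
       \<and> quantum_channel n m (fourier_measurement n m)
       \<and> M_tilde_diamond n m (fourier_measurement n m) = 2 * (real N0 - 1) / real N0"
proof -
  have N0: "0 < N0" "N0 \<le> n" "N0 \<le> m" unfolding N0_def using assms by auto
  have upper: "M_tilde_diamond n m \<Theta> \<le> 2 * (real N0 - 1) / real N0" if "quantum_channel n m \<Theta>" for \<Theta>
    unfolding N0_def using M_tilde_diamond_upper_bound[OF assms(1,2) that] .
  have channel: "quantum_channel n m (fourier_channel n m)"
    using fourier_channel_quantum_channel[OF assms(1,2)] .
  have measurement: "quantum_channel n m (fourier_measurement n m)"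
    using fourier_measurement_quantum_channel[OF assms(1,2)] .
  have "2 * (real N0 - 1) / real N0 \<le> M_tilde_diamond n m (fourier_channel n m)"
    using M_tilde_diamond_lower_bound[OF channel N0, of "\<lambda>a k. cnj (fourier_mat N0 $$ (a, k))"]
      cmod_fourier_mat[OF N0(1)] fourier_channel_diag[OF assms(1,2)] unfolding N0_def by simp
  then have channel_value: "M_tilde_diamond n m (fourier_channel n m) = 2 * (real N0 - 1) / real N0"
    using upper[OF channel] by (rule order_antisym[rotated])
  have "2 * (real N0 - 1) / real N0 \<le> M_tilde_diamond n m (fourier_measurement n m)"
    using M_tilde_diamond_lower_bound[OF measurement N0, of "\<lambda>a k. fourier_mat N0 $$ (a, k)"]
      cmod_fourier_mat[OF N0(1)] fourier_measurement_diag[OF assms(1,2)] unfolding N0_def by simp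
  then have measurement_value: "M_tilde_diamond n m (fourier_measurement n m) = 2 * (real N0 - 1) / real N0"
    using upper[OF measurement] by (rule order_antisym[rotated])
  show ?thesis using upper channel channel_value measurement measurement_value by blast
qed

end
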